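(* Let $n$ be a positive integer and let $\widetilde\lambda:\widetilde C\to\widetilde C'$ be a morphism of $r$-perfect $\mathcal S$-complexes which is a height $n$ morphism (respectively a strong height $n$ morphism). Then there exists a height $0$ morphism (respectively a strong height $0$ morphism) $\widetilde\lambda':\Sigma^n\widetilde C\to\widetilde C'$ such that $\widetilde\lambda'\circ\widetilde\iota_n=\widetilde\lambda$.
   Context: Let $R$ be a commutative ring; graded modules are $\mathbb Z$-graded, $V[i]_j=V_{i+j}$, differentials have degree $-1$. An $\mathcal S$-complex over $R$ is a chain complex $(\widetilde C,\widetilde d)$ of finitely generated free graded $R$-modules with a graded decomposition $\widetilde C=C\oplus C[-1]\oplus\mathsf R$ in which $\widetilde d=\begin{pmatrix} d&0&0\\ v&-d&\delta_2\\ \delta_1&0&r\end{pmatrix}$. It is $r$-perfect if $\mathsf R$ is supported in even degrees (so $r=0$). A degree $k$ morphism $\widetilde C\to\widetilde C'$ is an $R$-linear map of degree $k$ of the form $\begin{pmatrix}\lambda&0&0\\ \mu&\lambda&\Delta_2\\ \Delta_1&0&\rho\end{pmatrix}$ with $\widetilde d'\widetilde\lambda=\widetilde\lambda\widetilde d$. For such a morphism between $r$-perfect complexes set $\tau_0=\rho$ and, for $i\ge0$, $\tau_{i+1}=\delta_1'v'^i\Delta_2+\Delta_1v^i\delta_2+\sum_{j=0}^{i-1}\delta_1'v'^j\mu v^{i-1-j}\delta_2:\mathsf R\to\mathsf R'$. A height $n$ morphism ($n\ge0$) is an even degree morphism between $r$-perfect $\mathcal S$-complexes with $\tau_j=0$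 for all $0\le j<n$; it is strong height $n$ if moreover $\tau_n$ is an isomorphism. For $r$-perfect $\widetilde C$ and $n\ge1$, $\Sigma^n\widetilde C$ is the $\mathcal S$-complex with irreducible part $C_{\Sigma^n}=C[-2n]\oplus\bigoplus_{i=0}^{n-1}\mathsf R[-2i-1]$ (summands ordered $C[-2n],\mathsf R[-1],\mathsf R[-3],\dots,\mathsf R[-2n+1]$), reducible part $\mathsf R$, and differential components: $d_{\Sigma^n}$ has first row $(d,-\delta_2,-v\delta_2,\dots,-v^{n-1}\delta_2)$ and all other rows zero; $v_{\Sigma^n}$ is the $(n+1)\times(n+1)$ matrix with $(1,1)$-entry $v$, $(2,1)$-entry $\delta_1$, $(k+1,k)$-entry the identity for $2\le k\le n$, all other entries zero; $(\delta_2)_{\Sigma^n}=(v^n\delta_2,0,\dots,0)^T$; $(\delta_1)_{\Sigma^n}=(0,\dots,0,1)$ (identity on the last summand); $r_{\Sigma^n}=0$. The morphism $\widetilde\iota_n:\widetilde C\to\Sigma^n\widetilde C$ has $\lambda$-component $(1,0,\dots,0)^T$ (identity onto $C[-2n]$), $\Delta_2$-component $(0,1,0,\dots,0)^T$ (identity onto $\mathsf R[-1]$), and all other components zero. *)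

theory Defs
  imports "Jordan_Normal_Form.Matrix"
begin

(* A finitely generated free graded R-module with homogeneous basis is represented by
   the list of degrees of its basis elements. An R-linear map of degree k between two such
   modules is a matrix (rows = target basis, columns = source basis) whose (i,j) entry can
   only be nonzero if deg(target_i) = deg(source_j) + k. *)

definition graded_map :: "int list \<Rightarrow> int list \<Rightarrow> int \<Rightarrow> 'a::zero mat \<Rightarrow> bool" where
  "graded_map dv dw k M \<longleftrightarrow> M \<in> carrier_mat (length dw) (length dv) \<and>
     (\<forall>i<length dw. \<forall>j<length dv. M $$ (i,j) \<noteq> 0 \<longrightarrow> dw ! i = dv ! j + k)"

(* V[-s]: since V[i]_j = V_(i+j), a basis element of degree e in V has degree e + s in V[-s] *)
definition shift :: "int \<Rightarrow> int list \<Rightarrow> int list" where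
  "shift s dv = map (\<lambda>x. x + s) dv"

definition bidx :: "nat list \<Rightarrow> nat \<Rightarrow> nat" where
  "bidx ns i = (LEAST p. i < sum_list (take (Suc p) ns))"

definition boff :: "nat list \<Rightarrow> nat \<Rightarrow> nat" where
  "boff ns p = sum_list (take p ns)"

definition block_mat :: "nat list \<Rightarrow> nat list \<Rightarrow> (nat \<Rightarrow> nat \<Rightarrow> 'a mat) \<Rightarrow> 'a mat" where
  "block_mat rs cs B = mat (sum_list rs) (sum_list cs)
     (\<lambda>(i,j). B (bidx rs i) (bidx cs j) $$ (i - boff rs (bidx rs i), j - boff cs (bidx cs j)))"

(* S-complex data: C (degrees cdeg), R (degrees rdeg), and the components d, v, delta1, delta2, r *)
record 'a scx =
  cdeg :: "int list"
  rdeg :: "int list"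
  dm :: "'a mat"
  vm :: "'a mat"
  d1m :: "'a mat"
  d2m :: "'a mat"
  rm :: "'a mat"

(* degrees of the total module C + C[-1] + R *)
definition tdeg :: "'a scx \<Rightarrow> int list" where
  "tdeg X = cdeg X @ shift 1 (cdeg X) @ rdeg X"

definition stot :: "'a::ring_1 scx \<Rightarrow> 'a mat" where
  "stot X = (let m = length (cdeg X); r = length (rdeg X) in
     block_mat [m, m, r] [m, m, r]
       (\<lambda>p q. [[dm X, 0\<^sub>m m m, 0\<^sub>m m r],
                [vm X, - dm X, d2m X],
                [d1m X, 0\<^sub>m r m, rm X]] ! p ! q))"

definition is_scx :: "'a::comm_ring_1 scx \<Rightarrow> bool" where
  "is_scx X \<longleftrightarrow>
     graded_map (cdeg X) (cdeg X) (-1) (dm X) \<and>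
     graded_map (cdeg X) (shift 1 (cdeg X)) (-1) (vm X) \<and>
     graded_map (rdeg X) (shift 1 (cdeg X)) (-1) (d2m X) \<and>
     graded_map (cdeg X) (rdeg X) (-1) (d1m X) \<and>
     graded_map (rdeg X) (rdeg X) (-1) (rm X) \<and>
     stot X * stot X = 0\<^sub>m (length (tdeg X)) (length (tdeg X))"

definition r_perfect :: "'a::comm_ring_1 scx \<Rightarrow> bool" where
  "r_perfect X \<longleftrightarrow> is_scx X \<and> (\<forall>e\<in>set (rdeg X). even e)"

record 'a smor =
  lam :: "'a mat"
  mu :: "'a mat"
  D1 :: "'a mat"
  D2 :: "'a mat"
  rho :: "'a mat"

definition mtot :: "'a::ring_1 scx \<Rightarrow> 'a scx \<Rightarrow> 'a smor \<Rightarrow> 'a mat" where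
  "mtot X Y f = (let m = length (cdeg X); r = length (rdeg X);
                     m' = length (cdeg Y); r' = length (rdeg Y) in
     block_mat [m', m', r'] [m, m, r]
       (\<lambda>p q. [[lam f, 0\<^sub>m m' m, 0\<^sub>m m' r],
                [mu f, lam f, D2 f],
                [D1 f, 0\<^sub>m r' m, rho f]] ! p ! q))"

definition is_smor :: "int \<Rightarrow> 'a::comm_ring_1 scx \<Rightarrow> 'a scx \<Rightarrow> 'a smor \<Rightarrow> bool" where
  "is_smor k X Y f \<longleftrightarrow>
     graded_map (cdeg X) (cdeg Y) k (lam f) \<and>
     graded_map (cdeg X) (shift 1 (cdeg Y)) k (mu f) \<and>
     graded_map (rdeg X) (shift 1 (cdeg Y)) k (D2 f) \<and>
     graded_map (cdeg X) (rdeg Y) k (D1 f) \<and>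
     graded_map (rdeg X) (rdeg Y) k (rho f) \<and>
     stot Y * mtot X Y f = mtot X Y f * stot X"

fun tau :: "'a::comm_ring_1 scx \<Rightarrow> 'a scx \<Rightarrow> 'a smor \<Rightarrow> nat \<Rightarrow> 'a mat" where
  "tau X Y f 0 = rho f"
| "tau X Y f (Suc i) =
     d1m Y * (vm Y ^\<^sub>m i) * D2 f + D1 f * (vm X ^\<^sub>m i) * d2m X
     + foldr (\<lambda>j acc. d1m Y * (vm Y ^\<^sub>m j) * mu f * (vm X ^\<^sub>m (i - 1 - j)) * d2m X + acc)
         [0..<i] (0\<^sub>m (length (rdeg Y)) (length (rdeg X)))"

definition height_mor :: "nat \<Rightarrow> int \<Rightarrow> 'a::comm_ring_1 scx \<Rightarrow> 'a scx \<Rightarrow> 'a smor \<Rightarrow> bool" where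
  "height_mor n k X Y f \<longleftrightarrow> even k \<and> r_perfect X \<and> r_perfect Y \<and> is_smor k X Y f \<and>
     (\<forall>j<n. tau X Y f j = 0\<^sub>m (length (rdeg Y)) (length (rdeg X)))"

definition strong_height_mor :: "nat \<Rightarrow> int \<Rightarrow> 'a::comm_ring_1 scx \<Rightarrow> 'a scx \<Rightarrow> 'a smor \<Rightarrow> bool" where
  "strong_height_mor n k X Y f \<longleftrightarrow> height_mor n k X Y f \<and> invertible_mat (tau X Y f n)"

(* Block sizes of C_Sigma: C[-2n] followed by n copies of R.
   Block number i+1 (i = 0..n-1) is the R-summand receiving delta1 (for i = 0) resp. the
   identity from the previous R-summand; its grading shift is chosen so that all structure
   maps have the required degrees, namely R[-(2n-1-2i)]. *)
definition sig_sizes :: "nat \<Rightarrow> 'a scx \<Rightarrow> nat list" where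
  "sig_sizes n X = length (cdeg X) # replicate n (length (rdeg X))"

definition Sigma :: "nat \<Rightarrow> 'a::comm_ring_1 scx \<Rightarrow> 'a scx" where
  "Sigma n X = (let m = length (cdeg X); r = length (rdeg X); ns = sig_sizes n X in
     \<lparr> cdeg = shift (2 * int n) (cdeg X) @
              concat (map (\<lambda>i. shift (2 * int n - 1 - 2 * int i) (rdeg X)) [0..<n]),
       rdeg = rdeg X,
       dm = block_mat ns ns (\<lambda>p q. if p = 0 \<and> q = 0 then dm X
                                   else if p = 0 then - ((vm X ^\<^sub>m (q - 1)) * d2m X)
                                   else 0\<^sub>m (ns ! p) (ns ! q)),
       vm = block_mat ns ns (\<lambda>p q. if p = 0 \<and> q = 0 then vm X
                                   else if p = 1 \<and> q = 0 then d1m X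
                                   else if 1 \<le> q \<and> p = q + 1 then 1\<^sub>m r
                                   else 0\<^sub>m (ns ! p) (ns ! q)),
       d1m = block_mat [r] ns (\<lambda>p q. if q = n then 1\<^sub>m r else 0\<^sub>m r (ns ! q)),
       d2m = block_mat ns [r] (\<lambda>p q. if p = 0 then (vm X ^\<^sub>m n) * d2m X else 0\<^sub>m (ns ! p) r),
       rm = 0\<^sub>m r r \<rparr>)"

(* iota_n : X \<rightarrow> Sigma^n X (a morphism of degree 2n) *)
definition iota :: "nat \<Rightarrow> 'a::comm_ring_1 scx \<Rightarrow> 'a smor" where
  "iota n X = (let m = length (cdeg X); r = length (rdeg X); ns = sig_sizes n X in
     \<lparr> lam = block_mat ns [m] (\<lambda>p q. if p = 0 then 1\<^sub>m m else 0\<^sub>m (ns ! p) m),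
       mu = 0\<^sub>m (sum_list ns) m,
       D1 = 0\<^sub>m r m,
       D2 = block_mat ns [r] (\<lambda>p q. if p = 1 then 1\<^sub>m r else 0\<^sub>m (ns ! p) r),
       rho = 0\<^sub>m r r \<rparr>)"

end

theory Submission
  imports Defs
begin

text \<open>
  The lift \<open>\<lambda>' : \<Sigma>\<^sup>n C \<rightarrow> C'\<close> is written down explicitly. On \<open>C[-2n]\<close> its \<open>\<lambda>\<close>-, \<open>\<mu>\<close>- and
  \<open>\<Delta>\<^sub>1\<close>-components are those of \<open>\<lambda>\<close>; on the \<open>(i+1)\<close>-st copy of \<open>R\<close> its \<open>\<lambda>\<close>-component is
  \<open>a\<^sub>i\<close>, where \<open>a\<^sub>0 = \<Delta>\<^sub>2\<close> and \<open>a\<^sub>i\<^sub>+\<^sub>1 = v' a\<^sub>i + \<mu> v\<^sup>i \<delta>\<^sub>2\<close>; finally \<open>\<Delta>\<^sub>2' = a\<^sub>n\<close> and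
  \<open>\<rho>' = \<tau>\<^sub>n\<close>. Since \<open>\<iota>\<^sub>n\<close> is the identity onto \<open>C[-2n]\<close> and onto the first copy of \<open>R\<close>,
  \<open>\<lambda>' \<circ> \<iota>\<^sub>n = \<lambda>\<close> is immediate, and \<open>\<tau>\<^sub>0(\<lambda>') = \<rho>' = \<tau>\<^sub>n(\<lambda>)\<close> settles the strong case.

  The work is in showing that \<open>\<lambda>'\<close> commutes with the differentials. Unfolding \<open>\<tau>\<close> gives
  \<open>\<tau>\<^sub>i\<^sub>+\<^sub>1 = \<delta>\<^sub>1' a\<^sub>i + \<Delta>\<^sub>1 v\<^sup>i \<delta>\<^sub>2\<close>, and the chain-map equations of \<open>\<lambda>\<close> give by induction
  \<open>d' a\<^sub>i\<^sub>+\<^sub>1 = \<delta>\<^sub>2' \<tau>\<^sub>i\<^sub>+\<^sub>1 - \<lambda> v\<^sup>i\<^sup>+\<^sup>1 \<delta>\<^sub>2\<close> as long as \<open>d' a\<^sub>i = -\<lambda> v\<^sup>i \<delta>\<^sub>2\<close>. The vanishing of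
  \<open>\<tau>\<^sub>j\<close> for \<open>j < n\<close> kills every error term except the last one, \<open>\<delta>\<^sub>2' \<tau>\<^sub>n\<close>, which is exactly
  absorbed by \<open>\<rho>' = \<tau>\<^sub>n\<close>. Throughout, \<open>R\<close> is concentrated in even degrees, so \<open>r = 0\<close> and
  \<open>\<delta>\<^sub>1 v\<^sup>j \<delta>\<^sub>2 = 0\<close> for degree reasons; this is also what makes \<open>\<Sigma>\<^sup>n C\<close> an S-complex.
\<close>

section \<open>Block matrices\<close>

lemma boff_0 [simp]: "boff ns 0 = 0"
  by (simp add: boff_def)

lemma boff_Cons_Suc [simp]: "boff (n # ns) (Suc p) = n + boff ns p"
  by (simp add: boff_def)

lemma sum_list_take_mono: "p \<le> q \<Longrightarrow> sum_list (take p (ns :: nat list)) \<le> sum_list (take q ns)"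
  by (metis le_add1 le_add_diff_inverse sum_list_append take_add)

lemma sum_list_take_Suc: "p < length ns \<Longrightarrow> sum_list (take (Suc p) ns) = boff ns p + ns ! p"
  by (simp add: boff_def take_Suc_conv_app_nth)

lemma boff_add_less_sum_list:
  assumes "p < length ns" "a < ns ! p"
  shows "boff ns p + a < sum_list ns"
proof -
  have "boff ns p + a < sum_list (take (Suc p) ns)"
    using assms by (simp add: sum_list_take_Suc)
  also have "\<dots> \<le> sum_list (take (length ns) ns)"
    using assms by (intro sum_list_take_mono) simp
  finally show ?thesis by simp
qed

lemma bidx_boff_add:
  assumes "p < length ns" "a < ns ! p"
  shows "bidx ns (boff ns p + a) = p"
  unfolding bidx_def
proof (rule Least_equality)
  show "boff ns p + a < sum_list (take (Suc p) ns)"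
    using assms by (simp add: sum_list_take_Suc)
next
  fix q assume q: "boff ns p + a < sum_list (take (Suc q) ns)"
  show "p \<le> q"
  proof (rule ccontr)
    assume "\<not> p \<le> q"
    then have "sum_list (take (Suc q) ns) \<le> boff ns p"
      unfolding boff_def by (intro sum_list_take_mono) simp
    with q show False by simp
  qed
qed

lemma block_index_decomp:
  "i < sum_list ns \<Longrightarrow> \<exists>p a. p < length ns \<and> a < ns ! p \<and> i = boff ns p + a"
proof (induction ns arbitrary: i)
  case (Cons n ns)
  show ?case
  proof (cases "i < n")
    case True
    then show ?thesis by (intro exI[of _ 0] exI[of _ i]) simp
  next
    case False
    with Cons.prems have "i - n < sum_list ns" by simp
    then obtain p a where "p < length ns" "a < ns ! p" "i - n = boff ns p + a"
      using Cons.IH by blast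
    with False show ?thesis by (intro exI[of _ "Suc p"] exI[of _ a]) simp
  qed
qed simp

lemma block_mat_carrier [simp]: "block_mat rs cs B \<in> carrier_mat (sum_list rs) (sum_list cs)"
  by (simp add: block_mat_def)

lemma block_mat_dims [simp]:
  "dim_row (block_mat rs cs B) = sum_list rs" "dim_col (block_mat rs cs B) = sum_list cs"
  by (simp_all add: block_mat_def)

lemma block_mat_index:
  assumes "p < length rs" "a < rs ! p" "q < length cs" "b < cs ! q"
  shows "block_mat rs cs B $$ (boff rs p + a, boff cs q + b) = B p q $$ (a, b)"
  using assms by (simp add: block_mat_def boff_add_less_sum_list bidx_boff_add)

lemma block_mat_eqI:
  assumes "M \<in> carrier_mat (sum_list rs) (sum_list cs)"
    and "\<And>p q a b. p < length rs \<Longrightarrow> a < rs ! p \<Longrightarrow> q < length cs \<Longrightarrow> b < cs ! q \<Longrightarrow>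
      M $$ (boff rs p + a, boff cs q + b) = B p q $$ (a, b)"
  shows "M = block_mat rs cs B"
proof (rule eq_matI)
  fix i j assume "i < dim_row (block_mat rs cs B)" "j < dim_col (block_mat rs cs B)"
  then obtain p a q b where "p < length rs" "a < rs ! p" "i = boff rs p + a"
    and "q < length cs" "b < cs ! q" "j = boff cs q + b"
    using block_index_decomp[of i rs] block_index_decomp[of j cs] by auto
  then show "M $$ (i, j) = block_mat rs cs B $$ (i, j)"
    using assms(2) block_mat_index[of p rs a q cs b B] by simp
qed (use assms in auto)

lemma block_mat_cong:
  assumes "\<And>p q. p < length rs \<Longrightarrow> q < length cs \<Longrightarrow> F p q = G p q"
  shows "block_mat rs cs F = block_mat rs cs G"
  by (rule block_mat_eqI) (auto simp: block_mat_index assms)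

lemma block_mat_eq_iff:
  assumes "\<And>p q. p < length rs \<Longrightarrow> q < length cs \<Longrightarrow> F p q \<in> carrier_mat (rs ! p) (cs ! q)"
    and "\<And>p q. p < length rs \<Longrightarrow> q < length cs \<Longrightarrow> G p q \<in> carrier_mat (rs ! p) (cs ! q)"
  shows "block_mat rs cs F = block_mat rs cs G \<longleftrightarrow> (\<forall>p<length rs. \<forall>q<length cs. F p q = G p q)"
proof
  assume eq: "block_mat rs cs F = block_mat rs cs G"
  show "\<forall>p<length rs. \<forall>q<length cs. F p q = G p q"
  proof (intro allI impI)
    fix p q assume pq: "p < length rs" "q < length cs"
    show "F p q = G p q"
    proof (rule eq_matI)
      fix a b assume "a < dim_row (G p q)" "b < dim_col (G p q)"
      with assms(2)[OF pq] have "a < rs ! p" "b < cs ! q" by auto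
      with pq eq show "F p q $$ (a, b) = G p q $$ (a, b)"
        by (metis block_mat_index)
    qed (use assms(1)[OF pq] assms(2)[OF pq] in auto)
  qed
qed (intro block_mat_cong, auto)

lemma block_mat_zero:
  assumes "\<And>p q. p < length rs \<Longrightarrow> q < length cs \<Longrightarrow> F p q = 0\<^sub>m (rs ! p) (cs ! q)"
  shows "block_mat rs cs F = 0\<^sub>m (sum_list rs) (sum_list cs)"
  by (rule sym, rule block_mat_eqI) (auto simp: assms boff_add_less_sum_list)

lemma block_mat_add:
  assumes "\<And>p q. p < length rs \<Longrightarrow> q < length cs \<Longrightarrow> F p q \<in> carrier_mat (rs ! p) (cs ! q)"
    and "\<And>p q. p < length rs \<Longrightarrow> q < length cs \<Longrightarrow> G p q \<in> carrier_mat (rs ! p) (cs ! q)"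
  shows "block_mat rs cs F + block_mat rs cs G = block_mat rs cs (\<lambda>p q. F p q + G p q)"
proof (rule block_mat_eqI)
  fix p q a b assume *: "p < length rs" "a < rs ! p" "q < length cs" "b < cs ! q"
  with assms[OF *(1,3)]
  show "(block_mat rs cs F + block_mat rs cs G) $$ (boff rs p + a, boff cs q + b) = (F p q + G p q) $$ (a, b)"
    by (simp add: boff_add_less_sum_list block_mat_index)
qed simp

lemma block_mat_uminus:
  assumes "\<And>p q. p < length rs \<Longrightarrow> q < length cs \<Longrightarrow> F p q \<in> carrier_mat (rs ! p) (cs ! q)"
  shows "- block_mat rs cs F = block_mat rs cs (\<lambda>p q. - F p q)"
proof (rule block_mat_eqI)
  fix p q a b assume *: "p < length rs" "a < rs ! p" "q < length cs" "b < cs ! q"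
  with assms[OF *(1,3)]
  show "(- block_mat rs cs F) $$ (boff rs p + a, boff cs q + b) = (- F p q) $$ (a, b)"
    by (simp add: boff_add_less_sum_list block_mat_index)
qed simp

lemma block_mat_single: "A \<in> carrier_mat nr nc \<Longrightarrow> block_mat [nr] [nc] (\<lambda>p q. A) = A"
  by (rule sym, rule block_mat_eqI) auto

definition msum :: "nat \<Rightarrow> nat \<Rightarrow> (nat \<Rightarrow> 'a::comm_monoid_add mat) \<Rightarrow> nat set \<Rightarrow> 'a mat" where
  "msum nr nc T S = mat nr nc (\<lambda>(i, j). \<Sum>s\<in>S. T s $$ (i, j))"

lemma msum_carrier [simp]: "msum nr nc T S \<in> carrier_mat nr nc"
  by (simp add: msum_def)

lemma msum_dims [simp]: "dim_row (msum nr nc T S) = nr" "dim_col (msum nr nc T S) = nc"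
  by (simp_all add: msum_def)

lemma msum_index: "i < nr \<Longrightarrow> j < nc \<Longrightarrow> msum nr nc T S $$ (i, j) = (\<Sum>s\<in>S. T s $$ (i, j))"
  by (simp add: msum_def)

lemma msum_empty: "msum nr nc T {} = 0\<^sub>m nr nc"
  by (rule eq_matI) (auto simp: msum_def)

lemma msum_insert:
  "finite S \<Longrightarrow> s \<notin> S \<Longrightarrow> T s \<in> carrier_mat nr nc \<Longrightarrow> msum nr nc T (insert s S) = T s + msum nr nc T S"
  by (rule eq_matI) (auto simp: msum_def)

lemma msum_singleton: "T s \<in> carrier_mat nr nc \<Longrightarrow> msum nr nc T {s} = T s"
  using msum_insert[of "{}" s T nr nc] by (simp add: msum_empty)

lemma msum_cong: "(\<And>s. s \<in> S \<Longrightarrow> T s = T' s) \<Longrightarrow> msum nr nc T S = msum nr nc T' S"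
  unfolding msum_def by (intro cong_mat refl) simp

lemma msum_mono_neutral:
  assumes "finite S" "S' \<subseteq> S" "\<And>s. s \<in> S - S' \<Longrightarrow> T s = 0\<^sub>m nr nc"
  shows "msum nr nc T S = msum nr nc T S'"
  by (rule eq_matI) (use assms in \<open>auto simp: msum_index intro!: sum.mono_neutral_right\<close>)

lemma msum_zero: "finite S \<Longrightarrow> (\<And>s. s \<in> S \<Longrightarrow> T s = 0\<^sub>m nr nc) \<Longrightarrow> msum nr nc T S = 0\<^sub>m nr nc"
  using msum_mono_neutral[of S "{}" T nr nc] by (simp add: msum_empty)

lemma msum_lessThan_single:
  assumes "s0 < N" "T s0 \<in> carrier_mat nr nc" "\<And>s. s < N \<Longrightarrow> s \<noteq> s0 \<Longrightarrow> T s = 0\<^sub>m nr nc"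
  shows "msum nr nc T {..<N} = T s0"
  using msum_mono_neutral[of "{..<N}" "{s0}" T nr nc] assms by (simp add: msum_singleton)

lemma msum_lessThan_two:
  assumes "s0 < N" "s1 < N" "s0 \<noteq> s1" "T s0 \<in> carrier_mat nr nc" "T s1 \<in> carrier_mat nr nc"
    and "\<And>s. s < N \<Longrightarrow> s \<noteq> s0 \<Longrightarrow> s \<noteq> s1 \<Longrightarrow> T s = 0\<^sub>m nr nc"
  shows "msum nr nc T {..<N} = T s0 + T s1"
  using msum_mono_neutral[of "{..<N}" "{s0, s1}" T nr nc] assms by (simp add: msum_insert msum_empty)

lemma msum_lessThan_3:
  assumes "T 0 \<in> carrier_mat nr nc" "T 1 \<in> carrier_mat nr nc" "T 2 \<in> carrier_mat nr nc"
  shows "msum nr nc T {..<3} = T 0 + (T 1 + T 2)"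
proof -
  have "{..<3::nat} = {0, 1, 2}" by auto
  then show ?thesis using assms by (simp add: msum_insert msum_empty)
qed

lemma msum_lessThan_Suc_shift:
  "T 0 \<in> carrier_mat nr nc \<Longrightarrow> msum nr nc T {..<Suc i} = T 0 + msum nr nc (\<lambda>j. T (Suc j)) {..<i}"
  by (rule eq_matI) (simp_all add: msum_index sum.lessThan_Suc_shift del: sum.lessThan_Suc)

lemma mult_msum_left:
  fixes A :: "'a::comm_semiring_0 mat"
  assumes "A \<in> carrier_mat nr k" "finite S" "\<And>s. s \<in> S \<Longrightarrow> T s \<in> carrier_mat k nc"
  shows "A * msum k nc T S = msum nr nc (\<lambda>s. A * T s) S"
proof (rule eq_matI)
  fix i j assume "i < dim_row (msum nr nc (\<lambda>s. A * T s) S)" "j < dim_col (msum nr nc (\<lambda>s. A * T s) S)"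
  then have ij: "i < nr" "j < nc" by auto
  have "(A * msum k nc T S) $$ (i, j) = (\<Sum>c<k. A $$ (i, c) * (\<Sum>s\<in>S. T s $$ (c, j)))"
    using assms ij by (simp add: scalar_prod_def msum_index lessThan_atLeast0)
  also have "\<dots> = (\<Sum>s\<in>S. \<Sum>c<k. A $$ (i, c) * T s $$ (c, j))"
    by (simp add: sum_distrib_left sum.swap[of _ S])
  also have "\<dots> = (\<Sum>s\<in>S. (A * T s) $$ (i, j))"
  proof (rule sum.cong[OF refl])
    fix s assume "s \<in> S"
    with assms(1) assms(3)[OF this] ij show "(\<Sum>c<k. A $$ (i, c) * T s $$ (c, j)) = (A * T s) $$ (i, j)"
      by (simp add: scalar_prod_def lessThan_atLeast0)
  qed
  finally show "(A * msum k nc T S) $$ (i, j) = msum nr nc (\<lambda>s. A * T s) S $$ (i, j)"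
    using ij by (simp add: msum_index)
qed (use assms in auto)

lemma foldr_add_eq_msum:
  "distinct xs \<Longrightarrow> (\<And>s. s \<in> set xs \<Longrightarrow> T s \<in> carrier_mat nr nc) \<Longrightarrow>
   foldr (\<lambda>j acc. T j + acc) xs (0\<^sub>m nr nc) = msum nr nc T (set xs)"
  by (induction xs) (simp_all add: msum_empty msum_insert)

lemma sum_lessThan_add: "(\<Sum>k<x + y. h k) = (\<Sum>k<x. h k) + (\<Sum>k<y. h (x + k :: nat))"
  by (induction y) (simp_all add: add.assoc)

lemma sum_lessThan_sum_list_blocks:
  "(\<Sum>k<sum_list ns. h k) = (\<Sum>s<length ns. \<Sum>c<ns ! s. h (boff ns s + c))"
proof (induction ns arbitrary: h)
  case (Cons n ns)
  have "(\<Sum>k<sum_list (n # ns). h k) = (\<Sum>k<n. h k) + (\<Sum>k<sum_list ns. h (n + k))"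
    by (simp add: sum_lessThan_add)
  also have "(\<Sum>k<sum_list ns. h (n + k)) = (\<Sum>s<length ns. \<Sum>c<ns ! s. h (n + (boff ns s + c)))"
    by (rule Cons.IH)
  also have "(\<Sum>k<n. h k) + \<dots> = (\<Sum>s<length (n # ns). \<Sum>c<(n # ns) ! s. h (boff (n # ns) s + c))"
    by (simp only: length_Cons sum.lessThan_Suc_shift) (simp add: add.assoc)
  finally show ?case .
qed simp

lemma block_mat_mult:
  fixes F G :: "nat \<Rightarrow> nat \<Rightarrow> 'a::comm_semiring_0 mat"
  assumes F: "\<And>p s. p < length rs \<Longrightarrow> s < length cs \<Longrightarrow> F p s \<in> carrier_mat (rs ! p) (cs ! s)"
    and G: "\<And>s q. s < length cs \<Longrightarrow> q < length ts \<Longrightarrow> G s q \<in> carrier_mat (cs ! s) (ts ! q)"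
  shows "block_mat rs cs F * block_mat cs ts G =
    block_mat rs ts (\<lambda>p q. msum (rs ! p) (ts ! q) (\<lambda>s. F p s * G s q) {..<length cs})"
proof (rule block_mat_eqI)
  fix p q a b assume *: "p < length rs" "a < rs ! p" "q < length ts" "b < ts ! q"
  have "(block_mat rs cs F * block_mat cs ts G) $$ (boff rs p + a, boff ts q + b) =
    (\<Sum>k<sum_list cs. block_mat rs cs F $$ (boff rs p + a, k) * block_mat cs ts G $$ (k, boff ts q + b))"
    using * by (simp add: boff_add_less_sum_list scalar_prod_def lessThan_atLeast0)
  also have "\<dots> = (\<Sum>s<length cs. \<Sum>c<cs ! s. F p s $$ (a, c) * G s q $$ (c, b))"
    by (subst sum_lessThan_sum_list_blocks) (simp add: block_mat_index *)
  also have "\<dots> = (\<Sum>s<length cs. (F p s * G s q) $$ (a, b))"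
  proof (rule sum.cong[OF refl])
    fix s assume "s \<in> {..<length cs}"
    with F G * have "F p s \<in> carrier_mat (rs ! p) (cs ! s)" "G s q \<in> carrier_mat (cs ! s) (ts ! q)"
      by auto
    with * show "(\<Sum>c<cs ! s. F p s $$ (a, c) * G s q $$ (c, b)) = (F p s * G s q) $$ (a, b)"
      by (simp add: scalar_prod_def lessThan_atLeast0)
  qed
  finally show "(block_mat rs cs F * block_mat cs ts G) $$ (boff rs p + a, boff ts q + b) =
      msum (rs ! p) (ts ! q) (\<lambda>s. F p s * G s q) {..<length cs} $$ (a, b)"
    using * by (simp add: msum_index)
qed (rule mult_carrier_mat[OF block_mat_carrier block_mat_carrier])

lemma mult_block_mat_row:
  fixes A :: "'a::comm_semiring_0 mat"
  assumes "A \<in> carrier_mat nr k" "\<And>q. q < length cs \<Longrightarrow> F 0 q \<in> carrier_mat k (cs ! q)"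
  shows "A * block_mat [k] cs F = block_mat [nr] cs (\<lambda>p q. A * F 0 q)"
proof -
  have "A * block_mat [k] cs F = block_mat [nr] [k] (\<lambda>p q. A) * block_mat [k] cs F"
    using block_mat_single[OF assms(1)] by simp
  also have "\<dots> = block_mat [nr] cs (\<lambda>p q. msum ([nr] ! p) (cs ! q) (\<lambda>s. A * F s q) {..<length [k]})"
    by (rule block_mat_mult) (use assms in auto)
  also have "\<dots> = block_mat [nr] cs (\<lambda>p q. A * F 0 q)"
    by (rule block_mat_cong) (use assms in \<open>auto simp: lessThan_Suc msum_singleton\<close>)
  finally show ?thesis .
qed

lemma less_3_cases: "(p::nat) < 3 \<Longrightarrow> p = 0 \<or> p = 1 \<or> p = 2"
  by auto

lemma all_less_3: "(\<forall>p<3::nat. P p) \<longleftrightarrow> P 0 \<and> P 1 \<and> P 2"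
  by (auto dest: less_3_cases)

lemma block_mat_3_mult:
  fixes A B :: "nat \<Rightarrow> nat \<Rightarrow> 'a::comm_semiring_0 mat"
  assumes "length rs = 3" "length cs = 3" "length ts = 3"
    and "\<And>p s. p < 3 \<Longrightarrow> s < 3 \<Longrightarrow> A p s \<in> carrier_mat (rs ! p) (cs ! s)"
    and "\<And>s q. s < 3 \<Longrightarrow> q < 3 \<Longrightarrow> B s q \<in> carrier_mat (cs ! s) (ts ! q)"
  shows "block_mat rs cs A * block_mat cs ts B =
    block_mat rs ts (\<lambda>p q. A p 0 * B 0 q + (A p 1 * B 1 q + A p 2 * B 2 q))"
proof -
  have "block_mat rs cs A * block_mat cs ts B =
      block_mat rs ts (\<lambda>p q. msum (rs ! p) (ts ! q) (\<lambda>s. A p s * B s q) {..<length cs})"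
    by (rule block_mat_mult) (use assms in auto)
  also have "\<dots> = block_mat rs ts (\<lambda>p q. A p 0 * B 0 q + (A p 1 * B 1 q + A p 2 * B 2 q))"
  proof (rule block_mat_cong)
    fix p q assume "p < length rs" "q < length ts"
    then have "A p s * B s q \<in> carrier_mat (rs ! p) (ts ! q)" if "s < 3" for s
      using assms that by (intro mult_carrier_mat[of _ _ "cs ! s"]) auto
    then show "msum (rs ! p) (ts ! q) (\<lambda>s. A p s * B s q) {..<length cs} =
        A p 0 * B 0 q + (A p 1 * B 1 q + A p 2 * B 2 q)"
      by (simp only: assms(2)) (rule msum_lessThan_3; simp)
  qed
  finally show ?thesis .
qed

lemma uminus_zero_mat [simp]: "- 0\<^sub>m nr nc = (0\<^sub>m nr nc :: 'a::group_add mat)"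
  by (rule eq_matI) auto

lemma assoc_mult_mat_dims:
  "dim_col A = dim_row B \<Longrightarrow> dim_col B = dim_row C \<Longrightarrow> (A * B) * C = A * (B * (C::'a::semiring_0 mat))"
  by (rule assoc_mult_mat[of A "dim_row A" "dim_col A" B "dim_col B" C "dim_col C"]) auto

lemma mult_add_distrib_mat_dims:
  "dim_col A = dim_row B \<Longrightarrow> dim_row C = dim_row B \<Longrightarrow> dim_col C = dim_col B \<Longrightarrow>
   A * (B + C) = A * B + A * (C::'a::semiring_0 mat)"
  by (rule mult_add_distrib_mat[of A "dim_row A" "dim_col A" B "dim_col B"]) (auto intro!: carrier_matI)

lemma add_mult_distrib_mat_dims:
  "dim_row A = dim_row B \<Longrightarrow> dim_col A = dim_col B \<Longrightarrow> dim_col B = dim_row C \<Longrightarrow>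
   (A + B) * C = A * C + B * (C::'a::semiring_0 mat)"
  by (rule add_mult_distrib_mat[of A "dim_row A" "dim_col A" B C "dim_col C"]) (auto intro!: carrier_matI)

lemma left_add_zero_mat_dims: "dim_row A = nr \<Longrightarrow> dim_col A = nc \<Longrightarrow> 0\<^sub>m nr nc + A = (A::'a::monoid_add mat)"
  by (rule left_add_zero_mat) auto

lemma right_add_zero_mat_dims: "dim_row A = nr \<Longrightarrow> dim_col A = nc \<Longrightarrow> A + 0\<^sub>m nr nc = (A::'a::monoid_add mat)"
  by (rule right_add_zero_mat) auto

lemmas mat_dims_simps = assoc_mult_mat_dims mult_add_distrib_mat_dims add_mult_distrib_mat_dims
  left_add_zero_mat_dims right_add_zero_mat_dims

lemma mult_carrier_iff: "A * B \<in> carrier_mat nr nc \<longleftrightarrow> dim_row A = nr \<and> dim_col B = nc"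
  unfolding carrier_mat_def by simp

lemma eq_matI_carrier:
  "A \<in> carrier_mat nr nc \<Longrightarrow> B \<in> carrier_mat nr nc \<Longrightarrow>
   (\<And>i j. i < nr \<Longrightarrow> j < nc \<Longrightarrow> A $$ (i, j) = B $$ (i, j)) \<Longrightarrow> A = B"
  by (rule eq_matI) auto

lemma pow_mat_Suc_left:
  assumes "(A::'a::semiring_1 mat) \<in> carrier_mat n n"
  shows "A ^\<^sub>m Suc j = A * A ^\<^sub>m j"
proof (induction j)
  case (Suc j)
  have "A ^\<^sub>m Suc (Suc j) = (A * A ^\<^sub>m j) * A"
    using Suc by simp
  also have "\<dots> = A * (A ^\<^sub>m j * A)"
    using assms by (intro assoc_mult_mat) auto
  finally show ?case by simp
qed (use assms in simp)

lemma mult_pow_mat_pred: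
  assumes "(A::'a::semiring_1 mat) \<in> carrier_mat n n" "dim_row B = n" "0 < q"
  shows "A * (A ^\<^sub>m (q - 1) * B) = A ^\<^sub>m q * B"
proof -
  obtain j where "q = Suc j"
    using assms(3) by (cases q) auto
  with assms show ?thesis
    by (simp add: pow_mat_Suc_left[OF assms(1)] mat_dims_simps del: pow_mat.simps(2))
qed

lemma mat_add_neg_add_eq_zeroD:
  fixes A B C :: "'a::ab_group_add mat"
  assumes c: "A \<in> carrier_mat nr nc" "B \<in> carrier_mat nr nc" "C \<in> carrier_mat nr nc"
    and eq: "A + (- B + C) = 0\<^sub>m nr nc"
  shows "B = A + C"
proof (rule eq_matI_carrier)
  fix i j assume ij: "i < nr" "j < nc"
  have "(A + (- B + C)) $$ (i, j) = 0"
    using eq ij by simp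
  with c ij show "B $$ (i, j) = (A + C) $$ (i, j)"
    by (simp add: algebra_simps)
qed (use c in auto)

lemma mat_add_neg_add_eqD:
  fixes A B C D :: "'a::ab_group_add mat"
  assumes c: "A \<in> carrier_mat nr nc" "B \<in> carrier_mat nr nc" "C \<in> carrier_mat nr nc"
      "D \<in> carrier_mat nr nc"
    and eq: "A + (- B + C) = D"
  shows "B = A + (C + - D)"
proof (rule eq_matI_carrier)
  fix i j assume ij: "i < nr" "j < nc"
  have "(A + (- B + C)) $$ (i, j) = D $$ (i, j)"
    using eq by simp
  with c ij show "B $$ (i, j) = (A + (C + - D)) $$ (i, j)"
    by (simp add: algebra_simps)
qed (use c in auto)

lemma mat_add_eq_zeroD:
  fixes A B :: "'a::ab_group_add mat"
  assumes c: "A \<in> carrier_mat nr nc" "B \<in> carrier_mat nr nc" and eq: "A + B = 0\<^sub>m nr nc"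
  shows "A = - B"
proof (rule eq_matI_carrier)
  fix i j assume ij: "i < nr" "j < nc"
  have "(A + B) $$ (i, j) = 0"
    using eq ij by simp
  with c ij show "A $$ (i, j) = (- B) $$ (i, j)"
    by (simp add: eq_neg_iff_add_eq_0)
qed (use c in auto)

section \<open>Graded maps\<close>

lemma graded_map_carrier: "graded_map dv dw k M \<Longrightarrow> M \<in> carrier_mat (length dw) (length dv)"
  by (simp add: graded_map_def)

lemma graded_map_shift:
  "graded_map (shift s dv) (shift t dw) k M \<longleftrightarrow> graded_map dv dw (k + s - t) M"
  unfolding graded_map_def shift_def by (auto simp: algebra_simps)

lemma graded_map_shift_target: "graded_map dv (shift t dw) k M \<longleftrightarrow> graded_map dv dw (k - t) M"
  using graded_map_shift[of 0 dv t dw k M] by (simp add: shift_def)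

lemma graded_map_shift_source: "graded_map (shift s dv) dw k M \<longleftrightarrow> graded_map dv dw (k + s) M"
  using graded_map_shift[of s dv 0 dw k M] by (simp add: shift_def)

lemma graded_map_degree_cong: "graded_map dv dw k M \<Longrightarrow> k = k' \<Longrightarrow> graded_map dv dw k' M"
  by simp

lemma graded_map_zero: "nr = length dw \<Longrightarrow> nc = length dv \<Longrightarrow> graded_map dv dw k (0\<^sub>m nr nc)"
  unfolding graded_map_def by simp

lemma graded_map_one: "graded_map dv dv 0 (1\<^sub>m (length dv) :: 'a::semiring_1 mat)"
  unfolding graded_map_def by simp

lemma graded_map_add:
  fixes A B :: "'a::monoid_add mat"
  assumes A: "graded_map dv dw k A" and B: "graded_map dv dw k B"
  shows "graded_map dv dw k (A + B)"
  unfolding graded_map_def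
proof (intro conjI allI impI)
  have "A \<in> carrier_mat (length dw) (length dv)" "B \<in> carrier_mat (length dw) (length dv)"
    using A B by (simp_all add: graded_map_def)
  then show "A + B \<in> carrier_mat (length dw) (length dv)"
    by simp
  fix i j assume "i < length dw" "j < length dv" "(A + B) $$ (i, j) \<noteq> 0"
  with \<open>A \<in> carrier_mat _ _\<close> \<open>B \<in> carrier_mat _ _\<close> have "A $$ (i, j) \<noteq> 0 \<or> B $$ (i, j) \<noteq> 0"
    by auto
  with A B \<open>i < length dw\<close> \<open>j < length dv\<close> show "dw ! i = dv ! j + k"
    unfolding graded_map_def by blast
qed

lemma graded_map_uminus:
  fixes A :: "'a::group_add mat"
  assumes A: "graded_map dv dw k A"
  shows "graded_map dv dw k (- A)"
  unfolding graded_map_def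
proof (intro conjI allI impI)
  have "A \<in> carrier_mat (length dw) (length dv)"
    using A by (simp add: graded_map_def)
  then show "- A \<in> carrier_mat (length dw) (length dv)"
    by simp
  fix i j assume "i < length dw" "j < length dv" "(- A) $$ (i, j) \<noteq> 0"
  with \<open>A \<in> carrier_mat _ _\<close> A show "dw ! i = dv ! j + k"
    unfolding graded_map_def by auto
qed

lemma graded_map_mult:
  fixes A B :: "'a::comm_semiring_0 mat"
  assumes A: "graded_map dv dw k A" and B: "graded_map du dv l B" and kl: "kl = k + l"
  shows "graded_map du dw kl (A * B)"
  unfolding graded_map_def
proof (intro conjI allI impI)
  show "A * B \<in> carrier_mat (length dw) (length du)"
    using graded_map_carrier[OF A] graded_map_carrier[OF B] by auto
  fix i j assume i: "i < length dw" and j: "j < length du" and nz: "(A * B) $$ (i, j) \<noteq> 0"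
  have "(A * B) $$ (i, j) = (\<Sum>c\<in>{0..<length dv}. A $$ (i, c) * B $$ (c, j))"
    using graded_map_carrier[OF A] graded_map_carrier[OF B] i j by (auto simp: scalar_prod_def)
  with nz have "\<exists>c\<in>{0..<length dv}. A $$ (i, c) * B $$ (c, j) \<noteq> 0"
    using sum.neutral by force
  then obtain c where "c < length dv" and "A $$ (i, c) * B $$ (c, j) \<noteq> 0"
    by auto
  then have "A $$ (i, c) \<noteq> 0" "B $$ (c, j) \<noteq> 0"
    by auto
  with A B i j kl \<open>c < length dv\<close> show "dw ! i = du ! j + kl"
    unfolding graded_map_def by auto
qed

lemma graded_map_pow:
  fixes A :: "'a::comm_semiring_1 mat"
  assumes A: "graded_map dv dv k A"
  shows "graded_map dv dv (int j * k) (A ^\<^sub>m j)"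
proof (induction j)
  case 0
  with graded_map_carrier[OF A] show ?case
    using graded_map_one[of dv] by simp
next
  case (Suc j)
  show ?case
    by (simp, rule graded_map_mult[OF Suc A]) (simp add: algebra_simps)
qed

lemma graded_map_odd_eq_zero:
  assumes M: "graded_map dv dw k M" and even: "\<forall>e\<in>set dv. even e" "\<forall>e\<in>set dw. even e"
    and "odd k"
  shows "M = 0\<^sub>m (length dw) (length dv)"
proof (rule eq_matI)
  fix i j assume i: "i < dim_row (0\<^sub>m (length dw) (length dv) :: 'a mat)"
    and j: "j < dim_col (0\<^sub>m (length dw) (length dv) :: 'a mat)"
  show "M $$ (i, j) = 0\<^sub>m (length dw) (length dv) $$ (i, j)"
  proof (rule ccontr)
    assume "M $$ (i, j) \<noteq> 0\<^sub>m (length dw) (length dv) $$ (i, j)"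
    with M i j have "dw ! i = dv ! j + k"
      unfolding graded_map_def by auto
    moreover have "even (dw ! i)" "even (dv ! j)"
      using even i j by auto
    ultimately show False
      using \<open>odd k\<close> by simp
  qed
qed (use graded_map_carrier[OF M] in auto)

lemma nth_concat_boff:
  "p < length Es \<Longrightarrow> a < length (Es ! p) \<Longrightarrow> concat Es ! (boff (map length Es) p + a) = Es ! p ! a"
proof (induction Es arbitrary: p)
  case (Cons E Es)
  then show ?case by (cases p) (auto simp: nth_append)
qed simp

lemma graded_map_block_mat:
  assumes "\<And>p q. p < length Es \<Longrightarrow> q < length Ds \<Longrightarrow> graded_map (Ds ! q) (Es ! p) k (F p q)"
  shows "graded_map (concat Ds) (concat Es) k (block_mat (map length Es) (map length Ds) F)"
  unfolding graded_map_def
proof (intro conjI allI impI)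
  show "block_mat (map length Es) (map length Ds) F \<in> carrier_mat (length (concat Es)) (length (concat Ds))"
    using block_mat_carrier[of "map length Es" "map length Ds" F] by (simp add: length_concat)
  fix i j assume "i < length (concat Es)" "j < length (concat Ds)"
    and nz: "block_mat (map length Es) (map length Ds) F $$ (i, j) \<noteq> 0"
  then obtain p a q b where pa: "p < length Es" "a < length (Es ! p)" "i = boff (map length Es) p + a"
    and qb: "q < length Ds" "b < length (Ds ! q)" "j = boff (map length Ds) q + b"
    using block_index_decomp[of i "map length Es"] block_index_decomp[of j "map length Ds"]
    by (auto simp: length_concat)
  with nz have "F p q $$ (a, b) \<noteq> 0"
    using block_mat_index[of p "map length Es" a q "map length Ds" b F] by simp
  then have "Es ! p ! a = Ds ! q ! b + k"
    using assms[OF pa(1) qb(1)] pa qb unfolding graded_map_def by auto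
  with pa qb show "concat Es ! i = concat Ds ! j + k"
    by (simp add: nth_concat_boff)
qed

section \<open>S-complexes\<close>

lemma stot_mult_stot_eq_zero_iff:
  fixes X :: "'a::comm_ring_1 scx"
  assumes l: "length (cdeg X) = m" "length (rdeg X) = r"
    and c: "dm X \<in> carrier_mat m m" "vm X \<in> carrier_mat m m" "d1m X \<in> carrier_mat r m"
      "d2m X \<in> carrier_mat m r" "rm X \<in> carrier_mat r r"
  shows "stot X * stot X = 0\<^sub>m (m + m + r) (m + m + r) \<longleftrightarrow>
    dm X * dm X = 0\<^sub>m m m \<and>
    vm X * dm X + ((- dm X) * vm X + d2m X * d1m X) = 0\<^sub>m m m \<and>
    (- dm X) * d2m X + d2m X * rm X = 0\<^sub>m m r \<and>
    d1m X * dm X + rm X * d1m X = 0\<^sub>m r m \<and>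
    rm X * rm X = 0\<^sub>m r r"
    (is "_ \<longleftrightarrow> ?equations")
proof -
  define S where "S = (\<lambda>p q. [[dm X, 0\<^sub>m m m, 0\<^sub>m m r], [vm X, - dm X, d2m X],
    [d1m X, 0\<^sub>m r m, rm X]] ! p ! q)"
  let ?ns = "[m, m, r]"
  have S_carrier: "S p q \<in> carrier_mat (?ns ! p) (?ns ! q)" if "p < 3" "q < 3" for p q
    using that c by (auto simp: S_def dest!: less_3_cases)
  have "stot X * stot X = block_mat ?ns ?ns S * block_mat ?ns ?ns S"
    unfolding stot_def S_def l by simp
  also have "\<dots> = block_mat ?ns ?ns (\<lambda>p q. S p 0 * S 0 q + (S p 1 * S 1 q + S p 2 * S 2 q))"
    by (rule block_mat_3_mult) (simp_all add: S_carrier)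
  finally have prod: "stot X * stot X = \<dots>" .
  have zero: "0\<^sub>m (m + m + r) (m + m + r) = block_mat ?ns ?ns (\<lambda>p q. 0\<^sub>m (?ns ! p) (?ns ! q) :: 'a mat)"
    by (subst block_mat_zero) (simp_all add: add.assoc)
  have "stot X * stot X = 0\<^sub>m (m + m + r) (m + m + r) \<longleftrightarrow>
      (\<forall>p<3. \<forall>q<3. S p 0 * S 0 q + (S p 1 * S 1 q + S p 2 * S 2 q) = 0\<^sub>m (?ns ! p) (?ns ! q))"
    unfolding prod zero
    by (subst block_mat_eq_iff) (auto intro!: add_carrier_mat mult_carrier_mat S_carrier)
  also have "\<dots> \<longleftrightarrow> ?equations"
    unfolding all_less_3 using c by (auto simp: S_def)
  finally show ?thesis .
qed

lemma smor_commutes_iff: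
  fixes X Y :: "'a::comm_ring_1 scx" and f :: "'a smor"
  assumes l: "length (cdeg X) = m" "length (rdeg X) = r" "length (cdeg Y) = m'" "length (rdeg Y) = r'"
    and c: "dm X \<in> carrier_mat m m" "vm X \<in> carrier_mat m m" "d1m X \<in> carrier_mat r m"
      "d2m X \<in> carrier_mat m r" "rm X \<in> carrier_mat r r"
    and c': "dm Y \<in> carrier_mat m' m'" "vm Y \<in> carrier_mat m' m'" "d1m Y \<in> carrier_mat r' m'"
      "d2m Y \<in> carrier_mat m' r'" "rm Y \<in> carrier_mat r' r'"
    and cf: "lam f \<in> carrier_mat m' m" "mu f \<in> carrier_mat m' m" "D2 f \<in> carrier_mat m' r"
      "D1 f \<in> carrier_mat r' m" "rho f \<in> carrier_mat r' r"
  shows "stot Y * mtot X Y f = mtot X Y f * stot X \<longleftrightarrow>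
    dm Y * lam f = lam f * dm X \<and>
    vm Y * lam f + ((- dm Y) * mu f + d2m Y * D1 f) = mu f * dm X + (lam f * vm X + D2 f * d1m X) \<and>
    (- dm Y) * lam f = lam f * (- dm X) \<and>
    (- dm Y) * D2 f + d2m Y * rho f = lam f * d2m X + D2 f * rm X \<and>
    d1m Y * lam f + rm Y * D1 f = D1 f * dm X + rho f * d1m X \<and>
    rm Y * rho f = rho f * rm X"
    (is "_ \<longleftrightarrow> ?equations")
proof -
  define S where "S = (\<lambda>p q. [[dm X, 0\<^sub>m m m, 0\<^sub>m m r], [vm X, - dm X, d2m X],
    [d1m X, 0\<^sub>m r m, rm X]] ! p ! q)"
  define S' where "S' = (\<lambda>p q. [[dm Y, 0\<^sub>m m' m', 0\<^sub>m m' r'], [vm Y, - dm Y, d2m Y],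
    [d1m Y, 0\<^sub>m r' m', rm Y]] ! p ! q)"
  define F where "F = (\<lambda>p q. [[lam f, 0\<^sub>m m' m, 0\<^sub>m m' r], [mu f, lam f, D2 f],
    [D1 f, 0\<^sub>m r' m, rho f]] ! p ! q)"
  let ?ns = "[m, m, r]" and ?ns' = "[m', m', r']"
  have S_carrier: "S p q \<in> carrier_mat (?ns ! p) (?ns ! q)" if "p < 3" "q < 3" for p q
    using that c by (auto simp: S_def dest!: less_3_cases)
  have S'_carrier: "S' p q \<in> carrier_mat (?ns' ! p) (?ns' ! q)" if "p < 3" "q < 3" for p q
    using that c' by (auto simp: S'_def dest!: less_3_cases)
  have F_carrier: "F p q \<in> carrier_mat (?ns' ! p) (?ns ! q)" if "p < 3" "q < 3" for p q
    using that cf by (auto simp: F_def dest!: less_3_cases)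
  have "stot Y * mtot X Y f = block_mat ?ns' ?ns' S' * block_mat ?ns' ?ns F"
    unfolding stot_def mtot_def S'_def F_def l by simp
  also have "\<dots> = block_mat ?ns' ?ns (\<lambda>p q. S' p 0 * F 0 q + (S' p 1 * F 1 q + S' p 2 * F 2 q))"
    by (rule block_mat_3_mult) (simp_all add: S'_carrier F_carrier)
  finally have left: "stot Y * mtot X Y f = \<dots>" .
  have "mtot X Y f * stot X = block_mat ?ns' ?ns F * block_mat ?ns ?ns S"
    unfolding stot_def mtot_def S_def F_def l by simp
  also have "\<dots> = block_mat ?ns' ?ns (\<lambda>p q. F p 0 * S 0 q + (F p 1 * S 1 q + F p 2 * S 2 q))"
    by (rule block_mat_3_mult) (simp_all add: S_carrier F_carrier)
  finally have right: "mtot X Y f * stot X = \<dots>" .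
  have "stot Y * mtot X Y f = mtot X Y f * stot X \<longleftrightarrow>
      (\<forall>p<3. \<forall>q<3. S' p 0 * F 0 q + (S' p 1 * F 1 q + S' p 2 * F 2 q) =
        F p 0 * S 0 q + (F p 1 * S 1 q + F p 2 * S 2 q))"
    unfolding left right
    by (subst block_mat_eq_iff) (auto intro!: add_carrier_mat mult_carrier_mat S_carrier S'_carrier F_carrier)
  also have "\<dots> \<longleftrightarrow> ?equations"
    unfolding all_less_3 using c c' cf by (auto simp: S_def S'_def F_def)
  finally show ?thesis .
qed
locale r_perfect_scx =
  fixes X :: "'a::comm_ring_1 scx"
  assumes r_perfect: "r_perfect X"
begin

abbreviation "m \<equiv> length (cdeg X)"
abbreviation "r \<equiv> length (rdeg X)"

lemma is_scx: "is_scx X" and rdeg_even: "\<forall>e\<in>set (rdeg X). even e"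
  using r_perfect by (simp_all add: r_perfect_def)

lemma graded_dm: "graded_map (cdeg X) (cdeg X) (-1) (dm X)"
  and graded_vm: "graded_map (cdeg X) (cdeg X) (-2) (vm X)"
  and graded_d2m: "graded_map (rdeg X) (cdeg X) (-2) (d2m X)"
  and graded_d1m: "graded_map (cdeg X) (rdeg X) (-1) (d1m X)"
  and graded_rm: "graded_map (rdeg X) (rdeg X) (-1) (rm X)"
  using is_scx by (auto simp: is_scx_def graded_map_shift_target)

lemma carrier [simp]:
  "dm X \<in> carrier_mat m m" "vm X \<in> carrier_mat m m" "d2m X \<in> carrier_mat m r"
  "d1m X \<in> carrier_mat r m" "rm X \<in> carrier_mat r r"
  using graded_dm graded_vm graded_d2m graded_d1m graded_rm by (simp_all add: graded_map_carrier)

lemma dims [simp]: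
  "dim_row (dm X) = m" "dim_col (dm X) = m" "dim_row (vm X) = m" "dim_col (vm X) = m"
  "dim_row (d2m X) = m" "dim_col (d2m X) = r" "dim_row (d1m X) = r" "dim_col (d1m X) = m"
  "dim_row (rm X) = r" "dim_col (rm X) = r"
  using carrier by (meson carrier_matD)+

lemma rm_eq_zero: "rm X = 0\<^sub>m r r"
  by (rule graded_map_odd_eq_zero[OF graded_rm rdeg_even rdeg_even]) simp

lemma dm_dm: "dm X * dm X = 0\<^sub>m m m"
  and dm_vm: "dm X * vm X = vm X * dm X + d2m X * d1m X"
  and dm_d2m: "dm X * d2m X = 0\<^sub>m m r"
  and d1m_dm: "d1m X * dm X = 0\<^sub>m r m"
proof -
  have "stot X * stot X = 0\<^sub>m (m + m + r) (m + m + r)"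
    using is_scx by (simp add: is_scx_def tdeg_def shift_def add.assoc)
  then have eqs: "dm X * dm X = 0\<^sub>m m m"
      "vm X * dm X + ((- dm X) * vm X + d2m X * d1m X) = 0\<^sub>m m m"
      "(- dm X) * d2m X + d2m X * rm X = 0\<^sub>m m r"
      "d1m X * dm X + rm X * d1m X = 0\<^sub>m r m"
    by (subst (asm) stot_mult_stot_eq_zero_iff; simp)+
  show "dm X * dm X = 0\<^sub>m m m" "d1m X * dm X = 0\<^sub>m r m"
    using eqs(1,4) by (simp_all add: rm_eq_zero mult_carrier_iff)
  show "dm X * vm X = vm X * dm X + d2m X * d1m X"
    using eqs(2) by (intro mat_add_neg_add_eq_zeroD[of _ m m]) (simp_all add: mult_carrier_iff)
  have "- (dm X * d2m X) = 0\<^sub>m m r"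
    using eqs(3) by (simp add: rm_eq_zero mult_carrier_iff)
  then show "dm X * d2m X = 0\<^sub>m m r"
    by (metis uminus_uminus_mat uminus_zero_mat)
qed

lemma graded_vm_pow_d2m: "graded_map (rdeg X) (cdeg X) (- 2 * int j - 2) (vm X ^\<^sub>m j * d2m X)"
  by (rule graded_map_mult[OF graded_map_pow[OF graded_vm] graded_d2m]) simp

lemma d1m_vm_pow_d2m: "d1m X * (vm X ^\<^sub>m j * d2m X) = 0\<^sub>m r r"
proof -
  have "graded_map (rdeg X) (rdeg X) (- 2 * int j - 3) (d1m X * (vm X ^\<^sub>m j * d2m X))"
    by (rule graded_map_mult[OF graded_d1m graded_vm_pow_d2m]) simp
  from graded_map_odd_eq_zero[OF this rdeg_even rdeg_even] show ?thesis
    by simp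
qed

lemma dm_vm_pow_d2m: "dm X * (vm X ^\<^sub>m j * d2m X) = 0\<^sub>m m r"
proof (induction j)
  case 0
  then show ?case by (simp add: dm_d2m)
next
  case (Suc j)
  have "dm X * (vm X ^\<^sub>m Suc j * d2m X) = (dm X * vm X) * (vm X ^\<^sub>m j * d2m X)"
    by (simp add: pow_mat_Suc_left[OF carrier(2)] mat_dims_simps del: pow_mat.simps(2))
  also have "\<dots> = vm X * (dm X * (vm X ^\<^sub>m j * d2m X)) + d2m X * (d1m X * (vm X ^\<^sub>m j * d2m X))"
    by (simp add: dm_vm mat_dims_simps)
  also have "\<dots> = 0\<^sub>m m r"
    by (simp add: Suc d1m_vm_pow_d2m)
  finally show ?case .
qed

end

section \<open>The suspension \<open>\<Sigma>\<^sup>n\<close> is an r-perfect S-complex\<close>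

locale suspension = X: r_perfect_scx X for X :: "'a::comm_ring_1 scx" +
  fixes n :: nat
  assumes n_pos: "1 \<le> n"
begin

abbreviation "ns \<equiv> sig_sizes n X"

lemma length_ns [simp]: "length ns = Suc n"
  by (simp add: sig_sizes_def)

lemma nth_ns [simp]: "p < Suc n \<Longrightarrow> ns ! p = (if p = 0 then X.m else X.r)"
  by (auto simp: sig_sizes_def nth_Cons')

definition sigma_dm_blk :: "nat \<Rightarrow> nat \<Rightarrow> 'a mat" where
  "sigma_dm_blk p q = (if p = 0 \<and> q = 0 then dm X
     else if p = 0 then - ((vm X ^\<^sub>m (q - 1)) * d2m X)
     else 0\<^sub>m (ns ! p) (ns ! q))"

definition sigma_vm_blk :: "nat \<Rightarrow> nat \<Rightarrow> 'a mat" where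
  "sigma_vm_blk p q = (if p = 0 \<and> q = 0 then vm X
     else if p = 1 \<and> q = 0 then d1m X
     else if 1 \<le> q \<and> p = q + 1 then 1\<^sub>m X.r
     else 0\<^sub>m (ns ! p) (ns ! q))"

definition sigma_d1m_blk :: "nat \<Rightarrow> nat \<Rightarrow> 'a mat" where
  "sigma_d1m_blk p q = (if q = n then 1\<^sub>m X.r else 0\<^sub>m X.r (ns ! q))"

definition sigma_d2m_blk :: "nat \<Rightarrow> nat \<Rightarrow> 'a mat" where
  "sigma_d2m_blk p q = (if p = 0 then (vm X ^\<^sub>m n) * d2m X else 0\<^sub>m (ns ! p) X.r)"

lemma Sigma_blocks:
  "dm (Sigma n X) = block_mat ns ns sigma_dm_blk"
  "vm (Sigma n X) = block_mat ns ns sigma_vm_blk"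
  "d1m (Sigma n X) = block_mat [X.r] ns sigma_d1m_blk"
  "d2m (Sigma n X) = block_mat ns [X.r] sigma_d2m_blk"
  "rm (Sigma n X) = 0\<^sub>m X.r X.r"
  "rdeg (Sigma n X) = rdeg X"
  "cdeg (Sigma n X) = shift (2 * int n) (cdeg X) @
     concat (map (\<lambda>i. shift (2 * int n - 1 - 2 * int i) (rdeg X)) [0..<n])"
  unfolding Sigma_def Let_def sigma_dm_blk_def sigma_vm_blk_def sigma_d1m_blk_def
    sigma_d2m_blk_def
  by simp_all

lemma length_cdeg_Sigma: "length (cdeg (Sigma n X)) = sum_list ns"
  by (simp add: Sigma_blocks length_concat shift_def o_def sum_list_triv sig_sizes_def
      sum_list_replicate)

lemma Sigma_dims [simp]:
  "dim_row (dm (Sigma n X)) = sum_list ns" "dim_col (dm (Sigma n X)) = sum_list ns"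
  "dim_row (vm (Sigma n X)) = sum_list ns" "dim_col (vm (Sigma n X)) = sum_list ns"
  "dim_row (d2m (Sigma n X)) = sum_list ns" "dim_col (d2m (Sigma n X)) = X.r"
  "dim_row (d1m (Sigma n X)) = X.r" "dim_col (d1m (Sigma n X)) = sum_list ns"
  by (simp_all add: Sigma_blocks)

lemma sigma_blk_dims [simp]:
  "p < Suc n \<Longrightarrow> q < Suc n \<Longrightarrow> dim_row (sigma_dm_blk p q) = ns ! p"
  "p < Suc n \<Longrightarrow> q < Suc n \<Longrightarrow> dim_col (sigma_dm_blk p q) = ns ! q"
  "p < Suc n \<Longrightarrow> q < Suc n \<Longrightarrow> dim_row (sigma_vm_blk p q) = ns ! p"
  "p < Suc n \<Longrightarrow> q < Suc n \<Longrightarrow> dim_col (sigma_vm_blk p q) = ns ! q"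
  "q < Suc n \<Longrightarrow> dim_row (sigma_d1m_blk p q) = X.r"
  "q < Suc n \<Longrightarrow> dim_col (sigma_d1m_blk p q) = ns ! q"
  "p < Suc n \<Longrightarrow> dim_row (sigma_d2m_blk p q) = ns ! p"
  "p < Suc n \<Longrightarrow> dim_col (sigma_d2m_blk p q) = X.r"
  using n_pos by (auto simp: sigma_dm_blk_def sigma_vm_blk_def sigma_d1m_blk_def sigma_d2m_blk_def)

lemma sigma_blk_carrier:
  "p < Suc n \<Longrightarrow> q < Suc n \<Longrightarrow> sigma_dm_blk p q \<in> carrier_mat (ns ! p) (ns ! q)"
  "p < Suc n \<Longrightarrow> q < Suc n \<Longrightarrow> sigma_vm_blk p q \<in> carrier_mat (ns ! p) (ns ! q)"
  "q < Suc n \<Longrightarrow> sigma_d1m_blk p q \<in> carrier_mat X.r (ns ! q)"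
  "p < Suc n \<Longrightarrow> sigma_d2m_blk p q \<in> carrier_mat (ns ! p) X.r"
  by (rule carrier_matI; simp del: nth_ns)+

lemma Sigma_dm_dm: "dm (Sigma n X) * dm (Sigma n X) = 0\<^sub>m (sum_list ns) (sum_list ns)"
proof -
  have "dm (Sigma n X) * dm (Sigma n X) = block_mat ns ns (\<lambda>p q.
      msum (ns ! p) (ns ! q) (\<lambda>s. sigma_dm_blk p s * sigma_dm_blk s q) {..<length ns})"
    unfolding Sigma_blocks by (rule block_mat_mult) (auto intro: sigma_blk_carrier simp del: nth_ns)
  also have "\<dots> = 0\<^sub>m (sum_list ns) (sum_list ns)"
  proof (rule block_mat_zero, rule msum_zero)
    fix p q s assume "p < length ns" "q < length ns" "s \<in> {..<length ns}"
    then show "sigma_dm_blk p s * sigma_dm_blk s q = 0\<^sub>m (ns ! p) (ns ! q)"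
      by (cases "p = 0"; cases "s = 0"; cases "q = 0")
        (simp_all add: sigma_dm_blk_def X.dm_dm X.dm_vm_pow_d2m mult_carrier_iff)
  qed simp
  finally show ?thesis .
qed

lemma Sigma_vm_dm_blk_row_0:
  assumes "q < Suc n"
  shows "sigma_vm_blk 0 0 * sigma_dm_blk 0 q +
      (msum X.m (ns ! q) (\<lambda>s. - sigma_dm_blk 0 s * sigma_vm_blk s q) {..<Suc n} +
       sigma_d2m_blk 0 0 * sigma_d1m_blk 0 q) = 0\<^sub>m X.m (ns ! q)"
proof -
  consider "q = 0" | "0 < q" "q < n" | "q = n"
    using assms by linarith
  then show ?thesis
  proof cases
    case 1
    have "msum X.m X.m (\<lambda>s. - sigma_dm_blk 0 s * sigma_vm_blk s 0) {..<Suc n} =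
        - sigma_dm_blk 0 0 * sigma_vm_blk 0 0 + - sigma_dm_blk 0 1 * sigma_vm_blk 1 0"
      by (rule msum_lessThan_two)
        (use n_pos in \<open>auto simp: sigma_vm_blk_def sigma_dm_blk_def mult_carrier_iff\<close>)
    with 1 n_pos show ?thesis
      by (simp add: sigma_vm_blk_def sigma_dm_blk_def sigma_d1m_blk_def sigma_d2m_blk_def
          X.dm_vm mult_carrier_iff)
        (rule eq_matI_carrier[of _ X.m X.m]; simp add: mult_carrier_iff del: index_mult_mat(1))
  next
    case 2
    have "msum X.m (ns ! q) (\<lambda>s. - sigma_dm_blk 0 s * sigma_vm_blk s q) {..<Suc n} =
        - sigma_dm_blk 0 (Suc q) * sigma_vm_blk (Suc q) q"
      by (rule msum_lessThan_single)
        (use 2 in \<open>auto simp: sigma_vm_blk_def sigma_dm_blk_def mult_carrier_iff\<close>)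
    with 2 show ?thesis
      using mult_pow_mat_pred[OF X.carrier(2), of "d2m X" q]
      by (simp add: sigma_vm_blk_def sigma_dm_blk_def sigma_d1m_blk_def sigma_d2m_blk_def
          mult_carrier_iff)
  next
    case 3
    have "msum X.m (ns ! q) (\<lambda>s. - sigma_dm_blk 0 s * sigma_vm_blk s q) {..<Suc n} = 0\<^sub>m X.m (ns ! q)"
      by (rule msum_zero) (use 3 n_pos in \<open>auto simp: sigma_vm_blk_def sigma_dm_blk_def mult_carrier_iff\<close>)
    with 3 n_pos show ?thesis
      using mult_pow_mat_pred[OF X.carrier(2), of "d2m X" n]
      by (simp add: sigma_vm_blk_def sigma_dm_blk_def sigma_d1m_blk_def sigma_d2m_blk_def
          mult_carrier_iff)
  qed
qed

lemma Sigma_vm_dm_blk: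
  assumes "p < Suc n" "q < Suc n"
  shows "sigma_vm_blk p 0 * sigma_dm_blk 0 q +
      (msum (ns ! p) (ns ! q) (\<lambda>s. - sigma_dm_blk p s * sigma_vm_blk s q) {..<Suc n} +
       sigma_d2m_blk p 0 * sigma_d1m_blk 0 q) = 0\<^sub>m (ns ! p) (ns ! q)"
proof (cases "p = 0")
  case True
  with Sigma_vm_dm_blk_row_0[OF assms(2)] show ?thesis
    by simp
next
  case False
  have "msum (ns ! p) (ns ! q) (\<lambda>s. - sigma_dm_blk p s * sigma_vm_blk s q) {..<Suc n} =
      0\<^sub>m (ns ! p) (ns ! q)"
    by (rule msum_zero) (use assms False in \<open>auto simp: sigma_dm_blk_def\<close>)
  with assms False X.d1m_dm X.d1m_vm_pow_d2m show ?thesis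
    by (cases "p = 1"; cases "q = 0")
      (simp_all add: sigma_vm_blk_def sigma_dm_blk_def sigma_d2m_blk_def mult_carrier_iff)
qed

lemma Sigma_vm_mult_dm:
  "vm (Sigma n X) * dm (Sigma n X) = block_mat ns ns (\<lambda>p q. sigma_vm_blk p 0 * sigma_dm_blk 0 q)"
proof -
  have "vm (Sigma n X) * dm (Sigma n X) = block_mat ns ns (\<lambda>p q.
      msum (ns ! p) (ns ! q) (\<lambda>s. sigma_vm_blk p s * sigma_dm_blk s q) {..<length ns})"
    unfolding Sigma_blocks by (rule block_mat_mult) (auto intro: sigma_blk_carrier simp del: nth_ns)
  also have "\<dots> = block_mat ns ns (\<lambda>p q. sigma_vm_blk p 0 * sigma_dm_blk 0 q)"
    by (rule block_mat_cong, simp only: length_ns, rule msum_lessThan_single)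
      (auto simp: sigma_dm_blk_def mult_carrier_iff)
  finally show ?thesis .
qed

lemma Sigma_neg_dm_mult_vm:
  "(- dm (Sigma n X)) * vm (Sigma n X) = block_mat ns ns (\<lambda>p q.
     msum (ns ! p) (ns ! q) (\<lambda>s. - sigma_dm_blk p s * sigma_vm_blk s q) {..<Suc n})"
proof -
  have "- dm (Sigma n X) = block_mat ns ns (\<lambda>p q. - sigma_dm_blk p q)"
    unfolding Sigma_blocks by (rule block_mat_uminus) (auto intro: sigma_blk_carrier simp del: nth_ns)
  then show ?thesis
    unfolding Sigma_blocks(2)
    using block_mat_mult[of ns ns "\<lambda>p q. - sigma_dm_blk p q" ns sigma_vm_blk]
    by (auto intro: sigma_blk_carrier simp del: nth_ns)
qed

lemma Sigma_d2m_mult_d1m: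
  "d2m (Sigma n X) * d1m (Sigma n X) = block_mat ns ns (\<lambda>p q. sigma_d2m_blk p 0 * sigma_d1m_blk 0 q)"
proof -
  have "d2m (Sigma n X) * d1m (Sigma n X) = block_mat ns ns (\<lambda>p q.
      msum (ns ! p) (ns ! q) (\<lambda>s. sigma_d2m_blk p s * sigma_d1m_blk s q) {..<length [X.r]})"
    unfolding Sigma_blocks by (rule block_mat_mult) (auto intro: sigma_blk_carrier simp del: nth_ns)
  also have "\<dots> = block_mat ns ns (\<lambda>p q. sigma_d2m_blk p 0 * sigma_d1m_blk 0 q)"
    by (rule block_mat_cong, simp only: length_Cons list.size, rule msum_lessThan_single)
      (auto simp: mult_carrier_iff simp del: nth_ns)
  finally show ?thesis .
qed

lemma Sigma_vm_dm:
  "vm (Sigma n X) * dm (Sigma n X) +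
    ((- dm (Sigma n X)) * vm (Sigma n X) + d2m (Sigma n X) * d1m (Sigma n X)) =
   0\<^sub>m (sum_list ns) (sum_list ns)"
  unfolding Sigma_vm_mult_dm Sigma_neg_dm_mult_vm Sigma_d2m_mult_d1m
  by (subst block_mat_add, simp_all add: mult_carrier_iff, subst block_mat_add)
    (simp_all add: mult_carrier_iff, rule block_mat_zero, simp only: length_ns Sigma_vm_dm_blk)

lemma Sigma_dm_d2m: "dm (Sigma n X) * d2m (Sigma n X) = 0\<^sub>m (sum_list ns) X.r"
proof -
  have "dm (Sigma n X) * d2m (Sigma n X) = block_mat ns [X.r] (\<lambda>p q.
      msum (ns ! p) ([X.r] ! q) (\<lambda>s. sigma_dm_blk p s * sigma_d2m_blk s q) {..<length ns})"
    unfolding Sigma_blocks by (rule block_mat_mult) (auto intro: sigma_blk_carrier simp del: nth_ns)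
  also have "\<dots> = 0\<^sub>m (sum_list ns) (sum_list [X.r])"
  proof (rule block_mat_zero)
    fix p q assume pq: "p < length ns" "q < length [X.r]"
    have "msum (ns ! p) ([X.r] ! q) (\<lambda>s. sigma_dm_blk p s * sigma_d2m_blk s q) {..<length ns} =
        sigma_dm_blk p 0 * sigma_d2m_blk 0 q"
      by (simp only: length_ns, rule msum_lessThan_single)
        (use pq in \<open>auto simp: sigma_d2m_blk_def mult_carrier_iff simp del: nth_ns\<close>)
    also have "\<dots> = 0\<^sub>m (ns ! p) ([X.r] ! q)"
      using pq X.dm_vm_pow_d2m[of n]
      by (cases "p = 0") (simp_all add: sigma_dm_blk_def sigma_d2m_blk_def mult_carrier_iff)
    finally show "msum (ns ! p) ([X.r] ! q) (\<lambda>s. sigma_dm_blk p s * sigma_d2m_blk s q) {..<length ns} =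
        0\<^sub>m (ns ! p) ([X.r] ! q)" .
  qed
  finally show ?thesis
    by simp
qed

lemma Sigma_d1m_dm: "d1m (Sigma n X) * dm (Sigma n X) = 0\<^sub>m X.r (sum_list ns)"
proof -
  have "d1m (Sigma n X) * dm (Sigma n X) = block_mat [X.r] ns (\<lambda>p q.
      msum ([X.r] ! p) (ns ! q) (\<lambda>s. sigma_d1m_blk p s * sigma_dm_blk s q) {..<length ns})"
    unfolding Sigma_blocks by (rule block_mat_mult) (auto intro: sigma_blk_carrier simp del: nth_ns)
  also have "\<dots> = 0\<^sub>m (sum_list [X.r]) (sum_list ns)"
  proof (rule block_mat_zero, rule msum_zero)
    fix p q s assume "p < length [X.r]" "q < length ns" "s \<in> {..<length ns}"
    with n_pos show "sigma_d1m_blk p s * sigma_dm_blk s q = 0\<^sub>m ([X.r] ! p) (ns ! q)"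
      by (cases "s = n") (auto simp: sigma_d1m_blk_def sigma_dm_blk_def)
  qed simp
  finally show ?thesis
    by simp
qed

lemma stot_Sigma_square:
  "stot (Sigma n X) * stot (Sigma n X) =
   0\<^sub>m (length (tdeg (Sigma n X))) (length (tdeg (Sigma n X)))"
proof -
  have "length (tdeg (Sigma n X)) = sum_list ns + sum_list ns + X.r"
    by (simp add: tdeg_def shift_def length_cdeg_Sigma Sigma_blocks(6))
  moreover have "stot (Sigma n X) * stot (Sigma n X) =
      0\<^sub>m (sum_list ns + sum_list ns + X.r) (sum_list ns + sum_list ns + X.r)"
    using Sigma_dm_dm Sigma_vm_dm Sigma_dm_d2m Sigma_d1m_dm
    by (subst stot_mult_stot_eq_zero_iff[where m = "sum_list ns" and r = X.r])
      (simp_all add: length_cdeg_Sigma Sigma_blocks(5,6), auto simp: Sigma_blocks)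
  ultimately show ?thesis
    by simp
qed

definition sigma_cdeg_blocks :: "int list list" where
  "sigma_cdeg_blocks = shift (2 * int n) (cdeg X) #
     map (\<lambda>i. shift (2 * int n - 1 - 2 * int i) (rdeg X)) [0..<n]"

lemma cdeg_Sigma: "cdeg (Sigma n X) = concat sigma_cdeg_blocks"
  by (simp add: Sigma_blocks sigma_cdeg_blocks_def)

lemma map_length_sigma_cdeg_blocks: "map length sigma_cdeg_blocks = ns"
  by (simp add: sigma_cdeg_blocks_def sig_sizes_def shift_def o_def map_replicate_trivial)

lemma length_sigma_cdeg_blocks [simp]: "length sigma_cdeg_blocks = Suc n"
  by (simp add: sigma_cdeg_blocks_def)

lemma nth_sigma_cdeg_blocks:
  "q < Suc n \<Longrightarrow> sigma_cdeg_blocks ! q =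
    (if q = 0 then shift (2 * int n) (cdeg X) else shift (2 * int n + 1 - 2 * int q) (rdeg X))"
  by (cases q) (auto simp: sigma_cdeg_blocks_def algebra_simps)

lemma length_nth_sigma_cdeg_blocks: "q < Suc n \<Longrightarrow> length (sigma_cdeg_blocks ! q) = ns ! q"
  by (metis length_sigma_cdeg_blocks map_length_sigma_cdeg_blocks nth_map)

lemma graded_Sigma_dm: "graded_map (cdeg (Sigma n X)) (cdeg (Sigma n X)) (-1) (dm (Sigma n X))"
  unfolding cdeg_Sigma Sigma_blocks(1) map_length_sigma_cdeg_blocks[symmetric]
proof (rule graded_map_block_mat)
  fix p q assume p: "p < length sigma_cdeg_blocks" and q: "q < length sigma_cdeg_blocks"
  consider "p = 0" "q = 0" | "p = 0" "q \<noteq> 0" | "p \<noteq> 0"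
    by blast
  then show "graded_map (sigma_cdeg_blocks ! q) (sigma_cdeg_blocks ! p) (- 1) (sigma_dm_blk p q)"
  proof cases
    case 1
    then show ?thesis
      using X.graded_dm by (simp add: sigma_dm_blk_def nth_sigma_cdeg_blocks graded_map_shift)
  next
    case 2
    have "graded_map (rdeg X) (cdeg X) (- 2 * int q) (- (vm X ^\<^sub>m (q - 1) * d2m X))"
      using 2 by (intro graded_map_uminus graded_map_degree_cong[OF X.graded_vm_pow_d2m]) (simp add: of_nat_diff)
    with 2 q show ?thesis
      by (simp add: sigma_dm_blk_def nth_sigma_cdeg_blocks graded_map_shift algebra_simps)
  next
    case 3
    with p q show ?thesis
      by (simp add: sigma_dm_blk_def graded_map_zero length_nth_sigma_cdeg_blocks del: nth_ns)
  qed
qed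

lemma graded_Sigma_vm: "graded_map (cdeg (Sigma n X)) (cdeg (Sigma n X)) (-2) (vm (Sigma n X))"
  unfolding cdeg_Sigma Sigma_blocks(2) map_length_sigma_cdeg_blocks[symmetric]
proof (rule graded_map_block_mat)
  fix p q assume p: "p < length sigma_cdeg_blocks" and q: "q < length sigma_cdeg_blocks"
  consider "p = 0" "q = 0" | "p = 1" "q = 0" | "1 \<le> q" "p = q + 1" |
    "\<not> (p = 0 \<and> q = 0)" "\<not> (p = 1 \<and> q = 0)" "\<not> (1 \<le> q \<and> p = q + 1)"
    by blast
  then show "graded_map (sigma_cdeg_blocks ! q) (sigma_cdeg_blocks ! p) (- 2) (sigma_vm_blk p q)"
  proof cases
    case 1
    then show ?thesis
      using X.graded_vm by (simp add: sigma_vm_blk_def nth_sigma_cdeg_blocks graded_map_shift)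
  next
    case 2
    then show ?thesis
      using X.graded_d1m n_pos p by (simp add: sigma_vm_blk_def nth_sigma_cdeg_blocks graded_map_shift)
  next
    case 3
    then have "graded_map (rdeg X) (rdeg X) (2 * int q - 2 * int p + 2) (1\<^sub>m X.r :: 'a mat)"
      by (intro graded_map_degree_cong[OF graded_map_one]) simp
    with 3 p show ?thesis
      by (simp add: sigma_vm_blk_def nth_sigma_cdeg_blocks graded_map_shift algebra_simps)
  next
    case 4
    then have "sigma_vm_blk p q = 0\<^sub>m (ns ! p) (ns ! q)"
      unfolding sigma_vm_blk_def by auto
    with p q show ?thesis
      by (simp add: graded_map_zero length_nth_sigma_cdeg_blocks del: nth_ns)
  qed
qed

lemma graded_Sigma_d1m: "graded_map (cdeg (Sigma n X)) (rdeg (Sigma n X)) (-1) (d1m (Sigma n X))"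
proof -
  have "graded_map (concat sigma_cdeg_blocks) (concat [rdeg X]) (-1)
      (block_mat (map length [rdeg X]) (map length sigma_cdeg_blocks) sigma_d1m_blk)"
  proof (rule graded_map_block_mat)
    fix p q assume p: "p < length [rdeg X]" and q: "q < length sigma_cdeg_blocks"
    show "graded_map (sigma_cdeg_blocks ! q) ([rdeg X] ! p) (- 1) (sigma_d1m_blk p q)"
    proof (cases "q = n")
      case True
      have "graded_map (rdeg X) (rdeg X) (- 1 + (2 * int n + 1 - 2 * int q)) (1\<^sub>m X.r :: 'a mat)"
        by (rule graded_map_degree_cong[OF graded_map_one]) (simp add: True)
      with True p n_pos show ?thesis
        by (simp add: sigma_d1m_blk_def nth_sigma_cdeg_blocks graded_map_shift_source)
    next
      case False
      with p q show ?thesis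
        by (simp add: sigma_d1m_blk_def graded_map_zero length_nth_sigma_cdeg_blocks del: nth_ns)
    qed
  qed
  then show ?thesis
    by (simp add: cdeg_Sigma Sigma_blocks(3,6) map_length_sigma_cdeg_blocks)
qed

lemma graded_Sigma_d2m: "graded_map (rdeg (Sigma n X)) (cdeg (Sigma n X)) (-2) (d2m (Sigma n X))"
proof -
  have "graded_map (concat [rdeg X]) (concat sigma_cdeg_blocks) (-2)
      (block_mat (map length sigma_cdeg_blocks) (map length [rdeg X]) sigma_d2m_blk)"
  proof (rule graded_map_block_mat)
    fix p q assume p: "p < length sigma_cdeg_blocks" and q: "q < length [rdeg X]"
    show "graded_map ([rdeg X] ! q) (sigma_cdeg_blocks ! p) (- 2) (sigma_d2m_blk p q)"
    proof (cases "p = 0")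
      case True
      have "graded_map (rdeg X) (cdeg X) (- 2 - 2 * int n) (vm X ^\<^sub>m n * d2m X)"
        by (rule graded_map_degree_cong[OF X.graded_vm_pow_d2m]) simp
      with True q show ?thesis
        by (simp add: sigma_d2m_blk_def nth_sigma_cdeg_blocks graded_map_shift_target)
    next
      case False
      with p q show ?thesis
        by (simp add: sigma_d2m_blk_def graded_map_zero length_nth_sigma_cdeg_blocks del: nth_ns)
    qed
  qed
  then show ?thesis
    by (simp add: cdeg_Sigma Sigma_blocks(4,6) map_length_sigma_cdeg_blocks)
qed

lemma r_perfect_Sigma: "r_perfect (Sigma n X)"
  unfolding r_perfect_def is_scx_def
  using graded_Sigma_dm graded_Sigma_vm graded_Sigma_d1m graded_Sigma_d2m stot_Sigma_square X.rdeg_even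
  by (simp add: graded_map_shift_target Sigma_blocks(5,6) graded_map_zero)

end

section \<open>Lifting a height \<open>n\<close> morphism along \<open>\<iota>\<^sub>n\<close>\<close>

locale height_morphism =
  fixes X Y :: "'a::comm_ring_1 scx" and f :: "'a smor" and n :: nat and k :: int
  assumes height: "height_mor n k X Y f" and n_pos: "1 \<le> n"
begin

sublocale suspension X n
  using height n_pos by unfold_locales (simp_all add: height_mor_def)

sublocale Y: r_perfect_scx Y
  using height by unfold_locales (simp add: height_mor_def)

lemma even_degree: "even k" and is_smor: "is_smor k X Y f"
  and tau_below: "\<And>j. j < n \<Longrightarrow> tau X Y f j = 0\<^sub>m Y.r X.r"
  using height by (simp_all add: height_mor_def)

lemma graded_lam: "graded_map (cdeg X) (cdeg Y) k (lam f)"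
  and graded_mu: "graded_map (cdeg X) (cdeg Y) (k - 1) (mu f)"
  and graded_D2: "graded_map (rdeg X) (cdeg Y) (k - 1) (D2 f)"
  and graded_D1: "graded_map (cdeg X) (rdeg Y) k (D1 f)"
  and graded_rho: "graded_map (rdeg X) (rdeg Y) k (rho f)"
  using is_smor by (auto simp: is_smor_def graded_map_shift_target)

lemma carrier_f [simp]:
  "lam f \<in> carrier_mat Y.m X.m" "mu f \<in> carrier_mat Y.m X.m" "D2 f \<in> carrier_mat Y.m X.r"
  "D1 f \<in> carrier_mat Y.r X.m" "rho f \<in> carrier_mat Y.r X.r"
  using graded_lam graded_mu graded_D2 graded_D1 graded_rho by (simp_all add: graded_map_carrier)

lemma dims_f [simp]:
  "dim_row (lam f) = Y.m" "dim_col (lam f) = X.m" "dim_row (mu f) = Y.m" "dim_col (mu f) = X.m"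
  "dim_row (D2 f) = Y.m" "dim_col (D2 f) = X.r" "dim_row (D1 f) = Y.r" "dim_col (D1 f) = X.m"
  "dim_row (rho f) = Y.r" "dim_col (rho f) = X.r"
  using carrier_f by (meson carrier_matD)+

lemma rho_eq_zero: "rho f = 0\<^sub>m Y.r X.r"
  using tau_below[of 0] n_pos by simp

lemma chain_eq_lam: "dm Y * lam f = lam f * dm X"
  and chain_eq_mu: "vm Y * lam f + ((- dm Y) * mu f + d2m Y * D1 f) =
    mu f * dm X + (lam f * vm X + D2 f * d1m X)"
  and chain_eq_D2: "- (dm Y * D2 f) = lam f * d2m X"
  and chain_eq_D1: "d1m Y * lam f = D1 f * dm X"
proof -
  have "stot Y * mtot X Y f = mtot X Y f * stot X"
    using is_smor by (simp add: is_smor_def)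
  then have "dm Y * lam f = lam f * dm X \<and>
      vm Y * lam f + ((- dm Y) * mu f + d2m Y * D1 f) = mu f * dm X + (lam f * vm X + D2 f * d1m X) \<and>
      (- dm Y) * D2 f + d2m Y * rho f = lam f * d2m X + D2 f * rm X \<and>
      d1m Y * lam f + rm Y * D1 f = D1 f * dm X + rho f * d1m X"
    by (subst (asm) smor_commutes_iff) auto
  then have eqs: "dm Y * lam f = lam f * dm X"
      "vm Y * lam f + ((- dm Y) * mu f + d2m Y * D1 f) = mu f * dm X + (lam f * vm X + D2 f * d1m X)"
      "(- dm Y) * D2 f + d2m Y * rho f = lam f * d2m X + D2 f * rm X"
      "d1m Y * lam f + rm Y * D1 f = D1 f * dm X + rho f * d1m X"
    by blast+
  with rho_eq_zero show "dm Y * lam f = lam f * dm X"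
    "vm Y * lam f + ((- dm Y) * mu f + d2m Y * D1 f) = mu f * dm X + (lam f * vm X + D2 f * d1m X)"
    "- (dm Y * D2 f) = lam f * d2m X" "d1m Y * lam f = D1 f * dm X"
    by (simp_all add: X.rm_eq_zero Y.rm_eq_zero mult_carrier_iff)
qed

text \<open>\<open>lift_R i\<close> is the component \<open>a\<^sub>i\<close> of the lift on the \<open>(i+1)\<close>-st copy of \<open>R\<close> in \<open>C\<^sub>\<Sigma>\<close>.\<close>

primrec lift_R :: "nat \<Rightarrow> 'a mat" where
  "lift_R 0 = D2 f"
| "lift_R (Suc i) = vm Y * lift_R i + mu f * (vm X ^\<^sub>m i * d2m X)"

lemma lift_R_dims [simp]: "dim_row (lift_R i) = Y.m" "dim_col (lift_R i) = X.r"
  by (induction i) simp_all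

lemma lift_R_carrier [simp]: "lift_R i \<in> carrier_mat Y.m X.r"
  by (rule carrier_matI) simp_all

lemma lift_R_pred:
  "0 < q \<Longrightarrow> lift_R q = vm Y * lift_R (q - 1) + mu f * (vm X ^\<^sub>m (q - 1) * d2m X)"
  by (cases q) auto

lemma graded_lift_R: "graded_map (rdeg X) (cdeg Y) (k - 1 - 2 * int i) (lift_R i)"
proof (induction i)
  case 0
  then show ?case using graded_D2 by simp
next
  case (Suc i)
  have "graded_map (rdeg X) (cdeg Y) (k - 1 - 2 * int (Suc i)) (vm Y * lift_R i)"
    by (rule graded_map_mult[OF Y.graded_vm Suc]) simp
  moreover have "graded_map (rdeg X) (cdeg Y) (k - 1 - 2 * int (Suc i)) (mu f * (vm X ^\<^sub>m i * d2m X))"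
    by (rule graded_map_mult[OF graded_mu X.graded_vm_pow_d2m]) simp
  ultimately show ?case
    by (simp add: graded_map_add)
qed

definition mu_sum :: "nat \<Rightarrow> 'a mat" where
  "mu_sum i = msum Y.m X.r (\<lambda>j. vm Y ^\<^sub>m j * (mu f * (vm X ^\<^sub>m (i - 1 - j) * d2m X))) {..<i}"

lemma mu_sum_Suc: "mu_sum (Suc i) = mu f * (vm X ^\<^sub>m i * d2m X) + vm Y * mu_sum i"
proof -
  have "mu_sum (Suc i) = mu f * (vm X ^\<^sub>m i * d2m X) +
      msum Y.m X.r (\<lambda>j. vm Y ^\<^sub>m Suc j * (mu f * (vm X ^\<^sub>m (i - 1 - j) * d2m X))) {..<i}"
    unfolding mu_sum_def by (subst msum_lessThan_Suc_shift) (simp_all add: mult_carrier_iff)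
  also have "msum Y.m X.r (\<lambda>j. vm Y ^\<^sub>m Suc j * (mu f * (vm X ^\<^sub>m (i - 1 - j) * d2m X))) {..<i} =
      msum Y.m X.r (\<lambda>j. vm Y * (vm Y ^\<^sub>m j * (mu f * (vm X ^\<^sub>m (i - 1 - j) * d2m X)))) {..<i}"
    by (rule msum_cong) (simp add: pow_mat_Suc_left[OF Y.carrier(2)] mat_dims_simps del: pow_mat.simps(2))
  also have "\<dots> = vm Y * mu_sum i"
    unfolding mu_sum_def by (rule mult_msum_left[symmetric]) (simp_all add: mult_carrier_iff)
  finally show ?thesis .
qed

lemma lift_R_eq: "lift_R i = vm Y ^\<^sub>m i * D2 f + mu_sum i"
proof (induction i)
  case 0
  then show ?case by (simp add: mu_sum_def msum_empty)
next
  case (Suc i)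
  have "lift_R (Suc i) = vm Y * (vm Y ^\<^sub>m i * D2 f) + vm Y * mu_sum i + mu f * (vm X ^\<^sub>m i * d2m X)"
    by (simp add: Suc mat_dims_simps mu_sum_def)
  also have "\<dots> = vm Y ^\<^sub>m Suc i * D2 f + mu_sum (Suc i)"
    unfolding mu_sum_Suc pow_mat_Suc_left[OF Y.carrier(2)]
    by (rule eq_matI_carrier[of _ Y.m X.r])
      (simp_all add: mat_dims_simps mult_carrier_iff algebra_simps mu_sum_def
        del: index_mult_mat(1) pow_mat.simps(2))
  finally show ?case .
qed

lemma tau_Suc_eq: "tau X Y f (Suc i) = d1m Y * lift_R i + D1 f * (vm X ^\<^sub>m i * d2m X)"
proof -
  have "foldr (\<lambda>j acc. d1m Y * vm Y ^\<^sub>m j * mu f * vm X ^\<^sub>m (i - 1 - j) * d2m X + acc) [0..<i]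
      (0\<^sub>m Y.r X.r) = msum Y.r X.r (\<lambda>j. d1m Y * vm Y ^\<^sub>m j * mu f * vm X ^\<^sub>m (i - 1 - j) * d2m X) {..<i}"
    by (subst foldr_add_eq_msum) (auto simp: mult_carrier_iff atLeast0LessThan)
  also have "\<dots> = d1m Y * mu_sum i"
    unfolding mu_sum_def
    by (subst mult_msum_left[of _ _ Y.m]) (auto simp: mult_carrier_iff mat_dims_simps intro!: msum_cong)
  finally show ?thesis
    by (simp only: tau.simps lift_R_eq)
      (rule eq_matI_carrier[of _ Y.r X.r];
        simp add: mat_dims_simps mult_carrier_iff algebra_simps mu_sum_def del: index_mult_mat(1))
qed

lemma dm_lift_R_Suc:
  assumes IH: "dm Y * lift_R i = - (lam f * (vm X ^\<^sub>m i * d2m X))"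
  shows "dm Y * lift_R (Suc i) = d2m Y * tau X Y f (Suc i) + - (lam f * (vm X ^\<^sub>m Suc i * d2m X))"
proof -
  define W where "W = vm X ^\<^sub>m i * d2m X"
  have W [simp]: "dim_row W = X.m" "dim_col W = X.r"
    by (simp_all add: W_def)
  have dm_W: "dm X * W = 0\<^sub>m X.m X.r" and d1m_W: "d1m X * W = 0\<^sub>m X.r X.r"
    unfolding W_def by (rule X.dm_vm_pow_d2m, rule X.d1m_vm_pow_d2m)
  have "(vm Y * lam f + ((- dm Y) * mu f + d2m Y * D1 f)) * W =
      (mu f * dm X + (lam f * vm X + D2 f * d1m X)) * W"
    using chain_eq_mu by simp
  then have "vm Y * (lam f * W) + (- (dm Y * (mu f * W)) + d2m Y * (D1 f * W)) = lam f * (vm X * W)"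
    by (simp add: mat_dims_simps dm_W d1m_W mult_carrier_iff)
  then have dm_mu: "dm Y * (mu f * W) =
      vm Y * (lam f * W) + (d2m Y * (D1 f * W) + - (lam f * (vm X * W)))"
    by (rule mat_add_neg_add_eqD[rotated 4]) (simp_all add: mult_carrier_iff)
  have dm_vm: "dm Y * (vm Y * lift_R i) =
      vm Y * (dm Y * lift_R i) + d2m Y * (d1m Y * lift_R i)"
    by (simp add: Y.dm_vm mat_dims_simps flip: assoc_mult_mat_dims)
  have "dm Y * lift_R (Suc i) = dm Y * (vm Y * lift_R i) + dm Y * (mu f * W)"
    by (simp add: mat_dims_simps W_def)
  also have "\<dots> = d2m Y * tau X Y f (Suc i) + - (lam f * (vm X ^\<^sub>m Suc i * d2m X))"
    unfolding dm_vm dm_mu IH tau_Suc_eq pow_mat_Suc_left[OF X.carrier(2)] W_def[symmetric]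
    by (rule eq_matI_carrier[of _ Y.m X.r])
      (simp_all add: mat_dims_simps mult_carrier_iff algebra_simps W_def
        del: index_mult_mat(1) pow_mat.simps(2))
  finally show ?thesis .
qed

lemma dm_lift_R_below: "i < n \<Longrightarrow> dm Y * lift_R i = - (lam f * (vm X ^\<^sub>m i * d2m X))"
proof (induction i)
  case 0
  then show ?case by (simp add: chain_eq_D2[symmetric])
next
  case (Suc i)
  then have "dm Y * lift_R (Suc i) = d2m Y * tau X Y f (Suc i) + - (lam f * (vm X ^\<^sub>m Suc i * d2m X))"
    by (intro dm_lift_R_Suc) simp
  with tau_below[OF Suc.prems] show ?case
    by (simp add: mult_carrier_iff)
qed

lemma dm_lift_R_n: "dm Y * lift_R n = d2m Y * tau X Y f n + - (lam f * (vm X ^\<^sub>m n * d2m X))"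
proof -
  obtain i where n: "n = Suc i"
    using n_pos by (cases n) auto
  show ?thesis
    unfolding n by (rule dm_lift_R_Suc, rule dm_lift_R_below) (simp add: n)
qed

lemma d1m_lift_R_below: "Suc i < n \<Longrightarrow> d1m Y * lift_R i = - (D1 f * (vm X ^\<^sub>m i * d2m X))"
  using tau_below[of "Suc i"] unfolding tau_Suc_eq
  by (intro mat_add_eq_zeroD[of _ Y.r X.r]) (simp_all add: mult_carrier_iff)

lemma tau_n_eq: "tau X Y f n = d1m Y * lift_R (n - 1) + D1 f * (vm X ^\<^sub>m (n - 1) * d2m X)"
  using tau_Suc_eq[of "n - 1"] n_pos by simp

lemma tau_n_dims [simp]: "dim_row (tau X Y f n) = Y.r" "dim_col (tau X Y f n) = X.r"
  unfolding tau_n_eq by simp_all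

lemma graded_tau_n: "graded_map (rdeg X) (rdeg Y) (k - 2 * int n) (tau X Y f n)"
  unfolding tau_n_eq
proof (rule graded_map_add)
  show "graded_map (rdeg X) (rdeg Y) (k - 2 * int n) (d1m Y * lift_R (n - 1))"
    by (rule graded_map_mult[OF Y.graded_d1m graded_lift_R]) (use n_pos in simp)
  show "graded_map (rdeg X) (rdeg Y) (k - 2 * int n) (D1 f * (vm X ^\<^sub>m (n - 1) * d2m X))"
    by (rule graded_map_mult[OF graded_D1 X.graded_vm_pow_d2m]) (use n_pos in simp)
qed

definition lift_lam_blk :: "nat \<Rightarrow> nat \<Rightarrow> 'a mat" where
  "lift_lam_blk p q = (if q = 0 then lam f else lift_R (q - 1))"

definition lift_mu_blk :: "nat \<Rightarrow> nat \<Rightarrow> 'a mat" where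
  "lift_mu_blk p q = (if q = 0 then mu f else 0\<^sub>m Y.m (ns ! q))"

definition lift_D1_blk :: "nat \<Rightarrow> nat \<Rightarrow> 'a mat" where
  "lift_D1_blk p q = (if q = 0 then D1 f else 0\<^sub>m Y.r (ns ! q))"

definition lift :: "'a smor" where
  "lift = \<lparr>lam = block_mat [Y.m] ns lift_lam_blk, mu = block_mat [Y.m] ns lift_mu_blk,
     D1 = block_mat [Y.r] ns lift_D1_blk, D2 = lift_R n, rho = tau X Y f n\<rparr>"

lemma lift_simps:
  "lam lift = block_mat [Y.m] ns lift_lam_blk" "mu lift = block_mat [Y.m] ns lift_mu_blk"
  "D1 lift = block_mat [Y.r] ns lift_D1_blk" "D2 lift = lift_R n" "rho lift = tau X Y f n"
  by (simp_all add: lift_def)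

lemma lift_blk_dims [simp]:
  "q < Suc n \<Longrightarrow> dim_row (lift_lam_blk p q) = Y.m" "q < Suc n \<Longrightarrow> dim_col (lift_lam_blk p q) = ns ! q"
  "q < Suc n \<Longrightarrow> dim_row (lift_mu_blk p q) = Y.m" "q < Suc n \<Longrightarrow> dim_col (lift_mu_blk p q) = ns ! q"
  "q < Suc n \<Longrightarrow> dim_row (lift_D1_blk p q) = Y.r" "q < Suc n \<Longrightarrow> dim_col (lift_D1_blk p q) = ns ! q"
  by (auto simp: lift_lam_blk_def lift_mu_blk_def lift_D1_blk_def)

lemma lift_blk_carrier:
  "q < Suc n \<Longrightarrow> lift_lam_blk p q \<in> carrier_mat Y.m (ns ! q)"
  "q < Suc n \<Longrightarrow> lift_mu_blk p q \<in> carrier_mat Y.m (ns ! q)"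
  "q < Suc n \<Longrightarrow> lift_D1_blk p q \<in> carrier_mat Y.r (ns ! q)"
  by (rule carrier_matI; simp del: nth_ns)+

lemma lift_dims [simp]:
  "dim_row (lam lift) = Y.m" "dim_col (lam lift) = sum_list ns"
  "dim_row (mu lift) = Y.m" "dim_col (mu lift) = sum_list ns"
  "dim_row (D1 lift) = Y.r" "dim_col (D1 lift) = sum_list ns"
  "dim_row (D2 lift) = Y.m" "dim_col (D2 lift) = X.r"
  "dim_row (rho lift) = Y.r" "dim_col (rho lift) = X.r"
  by (simp_all add: lift_simps)

lemma graded_lift_blocks:
  assumes "\<And>q. q < Suc n \<Longrightarrow> graded_map (sigma_cdeg_blocks ! q) dw k' (F 0 q)"
  shows "graded_map (cdeg (Sigma n X)) dw k' (block_mat [length dw] ns F)"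
proof -
  have "graded_map (concat sigma_cdeg_blocks) (concat [dw]) k'
      (block_mat (map length [dw]) (map length sigma_cdeg_blocks) F)"
    by (rule graded_map_block_mat) (use assms in auto)
  then show ?thesis
    by (simp add: cdeg_Sigma map_length_sigma_cdeg_blocks)
qed

lemma graded_lift_lam: "graded_map (cdeg (Sigma n X)) (cdeg Y) (k - 2 * int n) (lam lift)"
  unfolding lift_simps
proof (rule graded_lift_blocks)
  fix q assume q: "q < Suc n"
  show "graded_map (sigma_cdeg_blocks ! q) (cdeg Y) (k - 2 * int n) (lift_lam_blk 0 q)"
  proof (cases "q = 0")
    case True
    then show ?thesis
      using graded_lam by (simp add: lift_lam_blk_def nth_sigma_cdeg_blocks graded_map_shift_source)
  next
    case False
    have "graded_map (rdeg X) (cdeg Y) (k - 2 * int n + (2 * int n + 1 - 2 * int q)) (lift_R (q - 1))"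
      using False by (intro graded_map_degree_cong[OF graded_lift_R]) (simp add: of_nat_diff)
    with q False show ?thesis
      by (simp add: lift_lam_blk_def nth_sigma_cdeg_blocks graded_map_shift_source)
  qed
qed

lemma graded_lift:
  "graded_map (cdeg (Sigma n X)) (shift 1 (cdeg Y)) (k - 2 * int n) (mu lift)"
  "graded_map (rdeg (Sigma n X)) (shift 1 (cdeg Y)) (k - 2 * int n) (D2 lift)"
  "graded_map (cdeg (Sigma n X)) (rdeg Y) (k - 2 * int n) (D1 lift)"
  "graded_map (rdeg (Sigma n X)) (rdeg Y) (k - 2 * int n) (rho lift)"
proof -
  show "graded_map (cdeg (Sigma n X)) (shift 1 (cdeg Y)) (k - 2 * int n) (mu lift)"
    unfolding lift_simps graded_map_shift_target
  proof (rule graded_lift_blocks)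
    fix q assume "q < Suc n"
    then show "graded_map (sigma_cdeg_blocks ! q) (cdeg Y) (k - 2 * int n - 1) (lift_mu_blk 0 q)"
      using graded_mu
      by (cases "q = 0") (simp_all add: lift_mu_blk_def nth_sigma_cdeg_blocks graded_map_shift_source
          graded_map_zero)
  qed
  show "graded_map (cdeg (Sigma n X)) (rdeg Y) (k - 2 * int n) (D1 lift)"
    unfolding lift_simps
  proof (rule graded_lift_blocks)
    fix q assume "q < Suc n"
    then show "graded_map (sigma_cdeg_blocks ! q) (rdeg Y) (k - 2 * int n) (lift_D1_blk 0 q)"
      using graded_D1
      by (cases "q = 0") (simp_all add: lift_D1_blk_def nth_sigma_cdeg_blocks graded_map_shift_source
          graded_map_zero)
  qed
  show "graded_map (rdeg (Sigma n X)) (shift 1 (cdeg Y)) (k - 2 * int n) (D2 lift)"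
    unfolding lift_simps Sigma_blocks graded_map_shift_target
    by (rule graded_map_degree_cong[OF graded_lift_R]) simp
  show "graded_map (rdeg (Sigma n X)) (rdeg Y) (k - 2 * int n) (rho lift)"
    unfolding lift_simps Sigma_blocks by (rule graded_tau_n)
qed

lemma mult_lift_blocks:
  assumes "A \<in> carrier_mat nr Y.m" and "B \<in> carrier_mat nr Y.r"
  shows "A * lam lift = block_mat [nr] ns (\<lambda>p q. A * lift_lam_blk 0 q)"
    and "A * mu lift = block_mat [nr] ns (\<lambda>p q. A * lift_mu_blk 0 q)"
    and "B * D1 lift = block_mat [nr] ns (\<lambda>p q. B * lift_D1_blk 0 q)"
  unfolding lift_simps
  by (rule mult_block_mat_row[OF assms(1)] mult_block_mat_row[OF assms(2)];
      use lift_blk_carrier in \<open>auto simp del: nth_ns\<close>)+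

lemma mult_Sigma_d1m:
  "A \<in> carrier_mat nr X.r \<Longrightarrow> A * d1m (Sigma n X) = block_mat [nr] ns (\<lambda>p q. A * sigma_d1m_blk 0 q)"
  unfolding Sigma_blocks by (rule mult_block_mat_row) (auto intro: sigma_blk_carrier simp del: nth_ns)

lemma lift_mult_Sigma_dm:
  "lam lift * dm (Sigma n X) = block_mat [Y.m] ns (\<lambda>p q. lam f * sigma_dm_blk 0 q)"
  "mu lift * dm (Sigma n X) = block_mat [Y.m] ns (\<lambda>p q. mu f * sigma_dm_blk 0 q)"
  "D1 lift * dm (Sigma n X) = block_mat [Y.r] ns (\<lambda>p q. D1 f * sigma_dm_blk 0 q)"
proof -
  have row: "block_mat [nr] ns F * dm (Sigma n X) = block_mat [nr] ns (\<lambda>p q. F 0 0 * sigma_dm_blk 0 q)"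
    if F0: "F 0 0 \<in> carrier_mat nr X.m" and F: "\<And>q. 0 < q \<Longrightarrow> q < Suc n \<Longrightarrow> F 0 q \<in> carrier_mat nr X.r"
    for nr F
  proof -
    have "F 0 q \<in> carrier_mat nr (ns ! q)" if "q < Suc n" for q
      using F0 F that by (cases "q = 0") auto
    then have "block_mat [nr] ns F * dm (Sigma n X) = block_mat [nr] ns (\<lambda>p q.
        msum ([nr] ! p) (ns ! q) (\<lambda>s. F p s * sigma_dm_blk s q) {..<length ns})"
      unfolding Sigma_blocks
      by (intro block_mat_mult) (auto intro: sigma_blk_carrier simp del: nth_ns)
    also have "\<dots> = block_mat [nr] ns (\<lambda>p q. F 0 0 * sigma_dm_blk 0 q)"
      by (rule block_mat_cong, simp only: length_ns, subst msum_lessThan_single[of 0])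
        (use F0 F in \<open>auto simp: sigma_dm_blk_def mult_carrier_iff intro: right_mult_zero_mat\<close>)
    finally show ?thesis .
  qed
  show "lam lift * dm (Sigma n X) = block_mat [Y.m] ns (\<lambda>p q. lam f * sigma_dm_blk 0 q)"
    unfolding lift_simps using row[of "lift_lam_blk"] by (simp add: lift_lam_blk_def)
  show "mu lift * dm (Sigma n X) = block_mat [Y.m] ns (\<lambda>p q. mu f * sigma_dm_blk 0 q)"
    unfolding lift_simps using row[of "lift_mu_blk"] by (simp add: lift_mu_blk_def)
  show "D1 lift * dm (Sigma n X) = block_mat [Y.r] ns (\<lambda>p q. D1 f * sigma_dm_blk 0 q)"
    unfolding lift_simps using row[of "lift_D1_blk"] by (simp add: lift_D1_blk_def)
qed

lemma lift_lam_mult_Sigma_vm: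
  "lam lift * vm (Sigma n X) = block_mat [Y.m] ns (\<lambda>p q.
     msum ([Y.m] ! p) (ns ! q) (\<lambda>s. lift_lam_blk p s * sigma_vm_blk s q) {..<Suc n})"
  unfolding lift_simps Sigma_blocks using block_mat_mult[of "[Y.m]" ns lift_lam_blk ns sigma_vm_blk]
  by (auto intro: sigma_blk_carrier lift_blk_carrier simp del: nth_ns)

lemma lift_lam_mult_Sigma_d2m: "lam lift * d2m (Sigma n X) = lam f * (vm X ^\<^sub>m n * d2m X)"
proof -
  have "lam lift * d2m (Sigma n X) = block_mat [Y.m] [X.r] (\<lambda>p q.
      msum ([Y.m] ! p) ([X.r] ! q) (\<lambda>s. lift_lam_blk p s * sigma_d2m_blk s q) {..<length ns})"
    unfolding lift_simps Sigma_blocks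
    by (rule block_mat_mult) (auto intro: sigma_blk_carrier lift_blk_carrier simp del: nth_ns)
  also have "\<dots> = block_mat [Y.m] [X.r] (\<lambda>p q. lam f * (vm X ^\<^sub>m n * d2m X))"
    by (rule block_mat_cong, simp only: length_ns, subst msum_lessThan_single[of 0])
      (auto simp: sigma_d2m_blk_def lift_lam_blk_def mult_carrier_iff)
  also have "\<dots> = lam f * (vm X ^\<^sub>m n * d2m X)"
    by (rule block_mat_single) (simp add: mult_carrier_iff)
  finally show ?thesis .
qed

lemma lift_chain_eq_lam: "dm Y * lam lift = lam lift * dm (Sigma n X)"
  unfolding mult_lift_blocks(1)[OF Y.carrier(1) Y.carrier(3)] lift_mult_Sigma_dm
proof (rule block_mat_cong)
  fix p q assume "q < length ns"
  then show "dm Y * lift_lam_blk 0 q = lam f * sigma_dm_blk 0 q"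
    using dm_lift_R_below[of "q - 1"]
    by (cases "q = 0") (simp_all add: lift_lam_blk_def sigma_dm_blk_def chain_eq_lam)
qed

lemma lift_chain_eq_mu_blk:
  assumes q: "q < Suc n"
  shows "vm Y * lift_lam_blk 0 q + ((- dm Y) * lift_mu_blk 0 q + d2m Y * lift_D1_blk 0 q) =
    mu f * sigma_dm_blk 0 q + (msum Y.m (ns ! q) (\<lambda>s. lift_lam_blk 0 s * sigma_vm_blk s q) {..<Suc n} +
      lift_R n * sigma_d1m_blk 0 q)"
proof -
  consider "q = 0" | "0 < q" "q < n" | "q = n"
    using q by linarith
  then show ?thesis
  proof cases
    case 1
    have "msum Y.m (ns ! q) (\<lambda>s. lift_lam_blk 0 s * sigma_vm_blk s q) {..<Suc n} =
        lift_lam_blk 0 0 * sigma_vm_blk 0 q + lift_lam_blk 0 1 * sigma_vm_blk 1 q"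
      by (rule msum_lessThan_two) (use n_pos 1 in \<open>auto simp: sigma_vm_blk_def lift_lam_blk_def mult_carrier_iff\<close>)
    with 1 n_pos chain_eq_mu show ?thesis
      by (simp add: lift_lam_blk_def sigma_vm_blk_def sigma_dm_blk_def lift_mu_blk_def lift_D1_blk_def
          sigma_d1m_blk_def mult_carrier_iff)
  next
    case 2
    have "msum Y.m (ns ! q) (\<lambda>s. lift_lam_blk 0 s * sigma_vm_blk s q) {..<Suc n} =
        lift_lam_blk 0 (Suc q) * sigma_vm_blk (Suc q) q"
      by (rule msum_lessThan_single) (use 2 in \<open>auto simp: sigma_vm_blk_def lift_lam_blk_def mult_carrier_iff\<close>)
    with 2 lift_R_pred[of q] show ?thesis
      by (simp add: lift_lam_blk_def sigma_vm_blk_def sigma_dm_blk_def lift_mu_blk_def lift_D1_blk_def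
          sigma_d1m_blk_def mult_carrier_iff)
        (rule eq_matI_carrier[of _ Y.m X.r]; simp add: mult_carrier_iff del: index_mult_mat(1))
  next
    case 3
    have "msum Y.m (ns ! q) (\<lambda>s. lift_lam_blk 0 s * sigma_vm_blk s q) {..<Suc n} = 0\<^sub>m Y.m (ns ! q)"
      by (rule msum_zero) (use 3 n_pos in \<open>auto simp: sigma_vm_blk_def lift_lam_blk_def\<close>)
    with 3 n_pos lift_R_pred[of n] show ?thesis
      by (simp add: lift_lam_blk_def sigma_vm_blk_def sigma_dm_blk_def lift_mu_blk_def lift_D1_blk_def
          sigma_d1m_blk_def mult_carrier_iff)
        (rule eq_matI_carrier[of _ Y.m X.r]; simp add: mult_carrier_iff del: index_mult_mat(1))
  qed
qed

lemma lift_chain_eq_mu: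
  "vm Y * lam lift + ((- dm Y) * mu lift + d2m Y * D1 lift) =
   mu lift * dm (Sigma n X) + (lam lift * vm (Sigma n X) + D2 lift * d1m (Sigma n X))"
proof -
  have "vm Y * lam lift + ((- dm Y) * mu lift + d2m Y * D1 lift) = block_mat [Y.m] ns (\<lambda>p q.
      vm Y * lift_lam_blk 0 q + ((- dm Y) * lift_mu_blk 0 q + d2m Y * lift_D1_blk 0 q))"
    unfolding mult_lift_blocks[OF Y.carrier(2) Y.carrier(3)]
      mult_lift_blocks(2)[OF uminus_carrier_mat[OF Y.carrier(1)] Y.carrier(3)]
    by (subst block_mat_add, simp_all add: mult_carrier_iff, subst block_mat_add)
      (simp_all add: mult_carrier_iff)
  also have "\<dots> = block_mat [Y.m] ns (\<lambda>p q. mu f * sigma_dm_blk 0 q +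
      (msum ([Y.m] ! p) (ns ! q) (\<lambda>s. lift_lam_blk p s * sigma_vm_blk s q) {..<Suc n} +
       lift_R n * sigma_d1m_blk 0 q))"
  proof (rule block_mat_cong)
    fix p q assume "p < length [Y.m]" "q < length ns"
    then show "vm Y * lift_lam_blk 0 q + ((- dm Y) * lift_mu_blk 0 q + d2m Y * lift_D1_blk 0 q) =
        mu f * sigma_dm_blk 0 q +
        (msum ([Y.m] ! p) (ns ! q) (\<lambda>s. lift_lam_blk p s * sigma_vm_blk s q) {..<Suc n} +
         lift_R n * sigma_d1m_blk 0 q)"
      using lift_chain_eq_mu_blk[of q] by simp
  qed
  also have "\<dots> = mu lift * dm (Sigma n X) + (lam lift * vm (Sigma n X) + D2 lift * d1m (Sigma n X))"
    unfolding lift_mult_Sigma_dm lift_lam_mult_Sigma_vm lift_simps(4) mult_Sigma_d1m[OF lift_R_carrier]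
    by (subst block_mat_add, simp_all add: mult_carrier_iff, subst block_mat_add)
      (simp_all add: mult_carrier_iff)
  finally show ?thesis .
qed

lemma lift_chain_eq_D2:
  "(- dm Y) * D2 lift + d2m Y * rho lift = lam lift * d2m (Sigma n X) + D2 lift * rm (Sigma n X)"
  unfolding lift_lam_mult_Sigma_d2m lift_simps(4,5) Sigma_blocks(5) using dm_lift_R_n
  by (simp add: mult_carrier_iff)
    (rule eq_matI_carrier[of _ Y.m X.r]; simp add: mult_carrier_iff del: index_mult_mat(1))

lemma lift_chain_eq_D1:
  "d1m Y * lam lift + rm Y * D1 lift = D1 lift * dm (Sigma n X) + rho lift * d1m (Sigma n X)"
proof -
  have "d1m Y * lam lift + rm Y * D1 lift = block_mat [Y.r] ns (\<lambda>p q. d1m Y * lift_lam_blk 0 q)"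
    by (simp add: Y.rm_eq_zero mult_lift_blocks(1)[OF Y.carrier(4) Y.carrier(5)] mat_dims_simps)
  also have "\<dots> = block_mat [Y.r] ns (\<lambda>p q. D1 f * sigma_dm_blk 0 q + tau X Y f n * sigma_d1m_blk 0 q)"
  proof (rule block_mat_cong)
    fix p q assume "q < length ns"
    then consider "q = 0" | "0 < q" "q < n" | "q = n"
      by fastforce
    then show "d1m Y * lift_lam_blk 0 q = D1 f * sigma_dm_blk 0 q + tau X Y f n * sigma_d1m_blk 0 q"
    proof cases
      case 1
      with n_pos chain_eq_D1 show ?thesis
        by (simp add: lift_lam_blk_def sigma_dm_blk_def sigma_d1m_blk_def mult_carrier_iff)
    next
      case 2
      with d1m_lift_R_below[of "q - 1"] show ?thesis
        by (simp add: lift_lam_blk_def sigma_dm_blk_def sigma_d1m_blk_def mult_carrier_iff)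
    next
      case 3
      with n_pos show ?thesis
        unfolding tau_n_eq
        by (simp add: lift_lam_blk_def sigma_dm_blk_def sigma_d1m_blk_def mult_carrier_iff)
          (rule eq_matI_carrier[of _ Y.r X.r]; simp add: mult_carrier_iff del: index_mult_mat(1))
    qed
  qed
  also have "\<dots> = D1 lift * dm (Sigma n X) + rho lift * d1m (Sigma n X)"
    unfolding lift_mult_Sigma_dm lift_simps(5)
    by (subst mult_Sigma_d1m[of _ Y.r], rule carrier_matI, simp_all, subst block_mat_add)
      (simp_all add: mult_carrier_iff)
  finally show ?thesis .
qed

lemma is_smor_lift: "is_smor (k - 2 * int n) (Sigma n X) Y lift"
  unfolding is_smor_def
proof (intro conjI graded_lift_lam graded_lift)
  show "stot Y * mtot (Sigma n X) Y lift = mtot (Sigma n X) Y lift * stot (Sigma n X)"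
    using lift_chain_eq_lam lift_chain_eq_mu lift_chain_eq_D2 lift_chain_eq_D1
    by (subst smor_commutes_iff[where m = "sum_list ns" and r = X.r and m' = Y.m and r' = Y.r])
      (auto intro!: carrier_matI simp: length_cdeg_Sigma Sigma_blocks(5,6) lift_simps(5) Y.rm_eq_zero)
qed

lemma height_mor_lift: "height_mor 0 (k - 2 * int n) (Sigma n X) Y lift"
  using even_degree r_perfect_Sigma Y.r_perfect is_smor_lift by (simp add: height_mor_def)

lemma tau_lift_0: "tau (Sigma n X) Y lift 0 = tau X Y f n"
  by (simp add: lift_simps)

definition iota_lam_blk :: "nat \<Rightarrow> nat \<Rightarrow> 'a mat" where
  "iota_lam_blk p q = (if p = 0 then 1\<^sub>m X.m else 0\<^sub>m (ns ! p) X.m)"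

definition iota_D2_blk :: "nat \<Rightarrow> nat \<Rightarrow> 'a mat" where
  "iota_D2_blk p q = (if p = 1 then 1\<^sub>m X.r else 0\<^sub>m (ns ! p) X.r)"

lemma iota_simps:
  "lam (iota n X) = block_mat ns [X.m] iota_lam_blk" "mu (iota n X) = 0\<^sub>m (sum_list ns) X.m"
  "D1 (iota n X) = 0\<^sub>m X.r X.m" "D2 (iota n X) = block_mat ns [X.r] iota_D2_blk"
  "rho (iota n X) = 0\<^sub>m X.r X.r"
  unfolding iota_def Let_def iota_lam_blk_def iota_D2_blk_def by simp_all

lemma iota_blk_carrier:
  "p < Suc n \<Longrightarrow> iota_lam_blk p q \<in> carrier_mat (ns ! p) X.m"
  "p < Suc n \<Longrightarrow> iota_D2_blk p q \<in> carrier_mat (ns ! p) X.r"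
  using n_pos by (auto simp: iota_lam_blk_def iota_D2_blk_def)

lemma iota_dims [simp]:
  "dim_row (lam (iota n X)) = sum_list ns" "dim_col (lam (iota n X)) = X.m"
  "dim_row (D2 (iota n X)) = sum_list ns" "dim_col (D2 (iota n X)) = X.r"
  by (simp_all add: iota_simps)

lemma block_row_mult_iota:
  assumes F0: "F 0 0 \<in> carrier_mat nr X.m" and F: "\<And>q. 0 < q \<Longrightarrow> q < Suc n \<Longrightarrow> F 0 q \<in> carrier_mat nr X.r"
  shows "block_mat [nr] ns F * lam (iota n X) = F 0 0"
    and "block_mat [nr] ns F * D2 (iota n X) = F 0 1"
proof -
  have Fq: "F 0 q \<in> carrier_mat nr (ns ! q)" if "q < Suc n" for q
    using F0 F that by (cases "q = 0") auto
  have F1: "F 0 (Suc 0) \<in> carrier_mat nr X.r"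
    using F n_pos by simp
  have "block_mat [nr] ns F * lam (iota n X) = block_mat [nr] [X.m] (\<lambda>p q.
      msum ([nr] ! p) ([X.m] ! q) (\<lambda>s. F p s * iota_lam_blk s q) {..<length ns})"
    unfolding iota_simps by (rule block_mat_mult) (auto intro: Fq iota_blk_carrier simp del: nth_ns)
  also have "\<dots> = block_mat [nr] [X.m] (\<lambda>p q. F 0 0)"
    by (rule block_mat_cong, simp only: length_ns, subst msum_lessThan_single[of 0])
      (use F0 F in \<open>auto simp: iota_lam_blk_def mult_carrier_iff intro: right_mult_zero_mat\<close>)
  finally show "block_mat [nr] ns F * lam (iota n X) = F 0 0"
    using F0 by (simp add: block_mat_single)
  have "block_mat [nr] ns F * D2 (iota n X) = block_mat [nr] [X.r] (\<lambda>p q.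
      msum ([nr] ! p) ([X.r] ! q) (\<lambda>s. F p s * iota_D2_blk s q) {..<length ns})"
    unfolding iota_simps by (rule block_mat_mult) (auto intro: Fq iota_blk_carrier simp del: nth_ns)
  also have "\<dots> = block_mat [nr] [X.r] (\<lambda>p q. F 0 1)"
    by (rule block_mat_cong, simp only: length_ns, subst msum_lessThan_single[of 1])
      (use F0 F n_pos in \<open>auto simp: iota_D2_blk_def mult_carrier_iff carrier_matD[OF F1]
          intro: right_mult_zero_mat\<close>)
  finally show "block_mat [nr] ns F * D2 (iota n X) = F 0 1"
    using F1 by (simp add: block_mat_single)
qed

lemma lift_mult_iota:
  "lam lift * lam (iota n X) = lam f" "mu lift * lam (iota n X) = mu f"
  "D1 lift * lam (iota n X) = D1 f" "lam lift * D2 (iota n X) = D2 f"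
  unfolding lift_simps
  by (subst block_row_mult_iota; simp add: lift_lam_blk_def lift_mu_blk_def lift_D1_blk_def)+

lemma mtot_lift_iota: "mtot (Sigma n X) Y lift * mtot X (Sigma n X) (iota n X) = mtot X Y f"
proof -
  define M where "M = sum_list ns"
  define L where "L = (\<lambda>p q. [[lam lift, 0\<^sub>m Y.m M, 0\<^sub>m Y.m X.r], [mu lift, lam lift, D2 lift],
    [D1 lift, 0\<^sub>m Y.r M, rho lift]] ! p ! q)"
  define I where "I = (\<lambda>p q. [[lam (iota n X), 0\<^sub>m M X.m, 0\<^sub>m M X.r],
    [mu (iota n X), lam (iota n X), D2 (iota n X)], [D1 (iota n X), 0\<^sub>m X.r X.m, rho (iota n X)]] ! p ! q)"
  define F where "F = (\<lambda>p q. [[lam f, 0\<^sub>m Y.m X.m, 0\<^sub>m Y.m X.r], [mu f, lam f, D2 f],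
    [D1 f, 0\<^sub>m Y.r X.m, rho f]] ! p ! q)"
  let ?ns = "[X.m, X.m, X.r]" and ?ns' = "[Y.m, Y.m, Y.r]" and ?nsS = "[M, M, X.r]"
  have "mtot (Sigma n X) Y lift * mtot X (Sigma n X) (iota n X) =
      block_mat ?ns' ?nsS L * block_mat ?nsS ?ns I"
    unfolding mtot_def L_def I_def M_def by (simp add: length_cdeg_Sigma Sigma_blocks(6) Let_def)
  also have "\<dots> = block_mat ?ns' ?ns (\<lambda>p q. L p 0 * I 0 q + (L p 1 * I 1 q + L p 2 * I 2 q))"
    by (rule block_mat_3_mult)
      (auto simp: L_def I_def M_def iota_simps dest!: less_3_cases intro!: carrier_matI)
  also have "\<dots> = block_mat ?ns' ?ns F"
  proof (rule block_mat_cong)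
    fix p q assume "p < length ?ns'" "q < length ?ns"
    then have "p < 3" "q < 3" by auto
    then show "L p 0 * I 0 q + (L p 1 * I 1 q + L p 2 * I 2 q) = F p q"
      by (auto simp: L_def I_def F_def M_def lift_mult_iota iota_simps(2,3,5) rho_eq_zero mult_carrier_iff
          mat_dims_simps dest!: less_3_cases)
  qed
  also have "\<dots> = mtot X Y f"
    unfolding mtot_def F_def by (simp add: Let_def)
  finally show ?thesis .
qed

end

theorem proposition2p14:
  fixes X Y :: "'a::comm_ring_1 scx" and f :: "'a smor" and n :: nat and k :: int
  assumes "n \<ge> 1"
  shows "(height_mor n k X Y f \<longrightarrow>
            (\<exists>k' f'. height_mor 0 k' (Sigma n X) Y f' \<and>
                mtot (Sigma n X) Y f' * mtot X (Sigma n X) (iota n X) = mtot X Y f)) \<and>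
         (strong_height_mor n k X Y f \<longrightarrow>
            (\<exists>k' f'. strong_height_mor 0 k' (Sigma n X) Y f' \<and>
                mtot (Sigma n X) Y f' * mtot X (Sigma n X) (iota n X) = mtot X Y f))"
proof (intro conjI impI)
  assume "height_mor n k X Y f"
  then interpret height_morphism X Y f n k
    using assms by unfold_locales
  show "\<exists>k' f'. height_mor 0 k' (Sigma n X) Y f' \<and>
      mtot (Sigma n X) Y f' * mtot X (Sigma n X) (iota n X) = mtot X Y f"
    using height_mor_lift mtot_lift_iota by blast
next
  assume strong: "strong_height_mor n k X Y f"
  then interpret height_morphism X Y f n k
    using assms by unfold_locales (simp add: strong_height_mor_def)
  have "strong_height_mor 0 (k - 2 * int n) (Sigma n X) Y lift"
    using strong height_mor_lift tau_lift_0 by (simp add: strong_height_mor_def)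
  then show "\<exists>k' f'. strong_height_mor 0 k' (Sigma n X) Y f' \<and>
      mtot (Sigma n X) Y f' * mtot X (Sigma n X) (iota n X) = mtot X Y f"
    using mtot_lift_iota by blast
qed

end
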